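(* Let $(E,\mu)$ and $(F,\nu)$ be fuzzy Riesz spaces with $F$ fuzzy Dedekind complete, and let $T:E\rightarrow F$ be a fuzzy order bounded operator. Then: (1) $T$ is fuzzy order continuous if and only if the fuzzy null ideal $N_S$ is a fuzzy band for every operator $S$ in the fuzzy ideal $A_T$ generated by $T$ in $FL_b(E,F)$; (2) $T$ is fuzzy $\sigma$-order continuous if and only if the fuzzy null ideal $N_S$ is a fuzzy $\sigma$-ideal for every $S\in A_T$.
   Context: A fuzzy order on a real vector space $E$ is a map $\mu:E\times E\to[0,1]$ with $\mu(x,x)=1$; $\mu(x,y)+\mu(y,x)>1$ implies $x=y$; and $\mu(x,z)\ge\sup_{y}\min(\mu(x,y),\mu(y,z))$. Write $x\le y$ for $\mu(x,y)>\frac12$; upper bounds, suprema and infima are taken with respect to this relation. $(E,\mu)$ is a fuzzy ordered linear space if $\mu(x_1,x_2)>\frac12$ implies $\mu(x_1,x_2)\le\mu(x_1+x,x_2+x)$ for all $x$ and $\mu(x_1,x_2)\le\mu(\alpha x_1,\alpha x_2)$ for all $\alpha>0$; it is a fuzzy Riesz space if $x\vee y=\sup\{x,y\}$, $x\wedge y=\inf\{x,y\}$ exist for all $x,y$; it is fuzzy Dedekind complete if every nonempty subset bounded above has a supremum. $|x|=x\vee(-x)$. A subset is fuzzy order bounded if it has an upper and a lower bound. A linear operator $T:E\to F$ is fuzzy positive if $0\le x$ implies $0\le Tx$, and fuzzy order bounded if it maps fuzzy order bounded sets to fuzzy order bounded sets; $FL_b(E,F)$ is the space of fuzzy order bounded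 operators, ordered by $S\le T$ iff $T-S$ is fuzzy positive; for $F$ fuzzy Dedekind complete it is a fuzzy Riesz space, $|S|$ denotes the modulus of $S$ in it, and $A_T$ is the smallest fuzzy ideal of $FL_b(E,F)$ containing $T$. The fuzzy null ideal of $S$ is $N_S=\{x\in E: |S|(|x|)=0\}$. A fuzzy ideal is a vector subspace $A$ such that $\mu(|x|,|y|)>\frac12$ and $y\in A$ imply $x\in A$; a fuzzy band is a fuzzy ideal containing the supremum (in $E$) of each of its subsets having a supremum; a fuzzy $\sigma$-ideal is a fuzzy ideal $A$ such that $0\le x_n\in A$, $x_n\uparrow x$ imply $x\in A$. $y_\alpha\downarrow 0$ means the net is decreasing with infimum $0$. A net $x_\alpha$ fuzzy order converges to $x$ if there is a net $y_\alpha$ (same index set) with $y_\alpha\downarrow0$ and $\mu(|x_\alpha-x|,y_\alpha)>\frac12$ for all $\alpha$. $T$ is fuzzy order continuous if $x_\alpha\to0$ in fuzzy order (nets) implies $Tx_\alpha\to0$ in fuzzy order, and fuzzy $\sigma$-order continuous if the same holds for sequences. *)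

theory Defs
  imports Complex_Main
begin

definition fuzzy_order :: "('a \<Rightarrow> 'a \<Rightarrow> real) \<Rightarrow> bool" where
  "fuzzy_order \<mu> \<longleftrightarrow>
     (\<forall>x y. 0 \<le> \<mu> x y \<and> \<mu> x y \<le> 1) \<and>
     (\<forall>x. \<mu> x x = 1) \<and>
     (\<forall>x y. \<mu> x y + \<mu> y x > 1 \<longrightarrow> x = y) \<and>
     (\<forall>x z. \<mu> x z \<ge> (SUP y. min (\<mu> x y) (\<mu> y z)))"

definition fle :: "('a \<Rightarrow> 'a \<Rightarrow> real) \<Rightarrow> 'a \<Rightarrow> 'a \<Rightarrow> bool" where
  "fle \<mu> x y \<longleftrightarrow> \<mu> x y > 1/2"

definition is_ub_on :: "'a set \<Rightarrow> ('a \<Rightarrow> 'a \<Rightarrow> bool) \<Rightarrow> 'a set \<Rightarrow> 'a \<Rightarrow> bool" where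
  "is_ub_on C le A u \<longleftrightarrow> u \<in> C \<and> (\<forall>a\<in>A. le a u)"

definition is_lb_on :: "'a set \<Rightarrow> ('a \<Rightarrow> 'a \<Rightarrow> bool) \<Rightarrow> 'a set \<Rightarrow> 'a \<Rightarrow> bool" where
  "is_lb_on C le A l \<longleftrightarrow> l \<in> C \<and> (\<forall>a\<in>A. le l a)"

definition is_sup_on :: "'a set \<Rightarrow> ('a \<Rightarrow> 'a \<Rightarrow> bool) \<Rightarrow> 'a set \<Rightarrow> 'a \<Rightarrow> bool" where
  "is_sup_on C le A s \<longleftrightarrow> is_ub_on C le A s \<and> (\<forall>u. is_ub_on C le A u \<longrightarrow> le s u)"

definition is_inf_on :: "'a set \<Rightarrow> ('a \<Rightarrow> 'a \<Rightarrow> bool) \<Rightarrow> 'a set \<Rightarrow> 'a \<Rightarrow> bool" where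
  "is_inf_on C le A i \<longleftrightarrow> is_lb_on C le A i \<and> (\<forall>l. is_lb_on C le A l \<longrightarrow> le l i)"

definition sup_on :: "'a set \<Rightarrow> ('a \<Rightarrow> 'a \<Rightarrow> bool) \<Rightarrow> 'a set \<Rightarrow> 'a" where
  "sup_on C le A = (THE s. is_sup_on C le A s)"

abbreviation fub :: "('a \<Rightarrow> 'a \<Rightarrow> real) \<Rightarrow> 'a set \<Rightarrow> 'a \<Rightarrow> bool" where
  "fub \<mu> \<equiv> is_ub_on UNIV (fle \<mu>)"
abbreviation flb :: "('a \<Rightarrow> 'a \<Rightarrow> real) \<Rightarrow> 'a set \<Rightarrow> 'a \<Rightarrow> bool" where
  "flb \<mu> \<equiv> is_lb_on UNIV (fle \<mu>)"
abbreviation is_fsup :: "('a \<Rightarrow> 'a \<Rightarrow> real) \<Rightarrow> 'a set \<Rightarrow> 'a \<Rightarrow> bool" where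
  "is_fsup \<mu> \<equiv> is_sup_on UNIV (fle \<mu>)"
abbreviation is_finf :: "('a \<Rightarrow> 'a \<Rightarrow> real) \<Rightarrow> 'a set \<Rightarrow> 'a \<Rightarrow> bool" where
  "is_finf \<mu> \<equiv> is_inf_on UNIV (fle \<mu>)"

definition fuzzy_ordered_linear_space :: "('a::real_vector \<Rightarrow> 'a \<Rightarrow> real) \<Rightarrow> bool" where
  "fuzzy_ordered_linear_space \<mu> \<longleftrightarrow> fuzzy_order \<mu> \<and>
     (\<forall>x1 x2 x. \<mu> x1 x2 > 1/2 \<longrightarrow> \<mu> x1 x2 \<le> \<mu> (x1 + x) (x2 + x)) \<and>
     (\<forall>x1 x2 (\<alpha>::real). \<mu> x1 x2 > 1/2 \<and> \<alpha> > 0 \<longrightarrow> \<mu> x1 x2 \<le> \<mu> (\<alpha> *\<^sub>R x1) (\<alpha> *\<^sub>R x2))"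

definition fuzzy_riesz :: "('a::real_vector \<Rightarrow> 'a \<Rightarrow> real) \<Rightarrow> bool" where
  "fuzzy_riesz \<mu> \<longleftrightarrow> fuzzy_ordered_linear_space \<mu> \<and>
     (\<forall>x y. (\<exists>s. is_fsup \<mu> {x, y} s) \<and> (\<exists>i. is_finf \<mu> {x, y} i))"

definition fuzzy_dedekind_complete :: "('a \<Rightarrow> 'a \<Rightarrow> real) \<Rightarrow> bool" where
  "fuzzy_dedekind_complete \<mu> \<longleftrightarrow>
     (\<forall>A. A \<noteq> {} \<and> (\<exists>u. fub \<mu> A u) \<longrightarrow> (\<exists>s. is_fsup \<mu> A s))"

definition fabs :: "('a::real_vector \<Rightarrow> 'a \<Rightarrow> real) \<Rightarrow> 'a \<Rightarrow> 'a" where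
  "fabs \<mu> x = sup_on UNIV (fle \<mu>) {x, - x}"

definition forder_bounded_set :: "('a \<Rightarrow> 'a \<Rightarrow> real) \<Rightarrow> 'a set \<Rightarrow> bool" where
  "forder_bounded_set \<mu> A \<longleftrightarrow> (\<exists>u. fub \<mu> A u) \<and> (\<exists>l. flb \<mu> A l)"

definition fuzzy_ideal :: "('a::real_vector \<Rightarrow> 'a \<Rightarrow> real) \<Rightarrow> 'a set \<Rightarrow> bool" where
  "fuzzy_ideal \<mu> A \<longleftrightarrow> subspace A \<and>
     (\<forall>x y. fle \<mu> (fabs \<mu> x) (fabs \<mu> y) \<and> y \<in> A \<longrightarrow> x \<in> A)"

definition fuzzy_band :: "('a::real_vector \<Rightarrow> 'a \<Rightarrow> real) \<Rightarrow> 'a set \<Rightarrow> bool" where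
  "fuzzy_band \<mu> A \<longleftrightarrow> fuzzy_ideal \<mu> A \<and>
     (\<forall>B s. B \<subseteq> A \<and> is_fsup \<mu> B s \<longrightarrow> s \<in> A)"

definition fincreases_to :: "('a \<Rightarrow> 'a \<Rightarrow> real) \<Rightarrow> (nat \<Rightarrow> 'a) \<Rightarrow> 'a \<Rightarrow> bool" where
  "fincreases_to \<mu> x s \<longleftrightarrow> (\<forall>m n. m \<le> n \<longrightarrow> fle \<mu> (x m) (x n)) \<and> is_fsup \<mu> (range x) s"

definition fuzzy_sigma_ideal :: "('a::real_vector \<Rightarrow> 'a \<Rightarrow> real) \<Rightarrow> 'a set \<Rightarrow> bool" where
  "fuzzy_sigma_ideal \<mu> A \<longleftrightarrow> fuzzy_ideal \<mu> A \<and>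
     (\<forall>x s. (\<forall>n. fle \<mu> 0 (x n) \<and> x n \<in> A) \<and> fincreases_to \<mu> x s \<longrightarrow> s \<in> A)"

definition directed_set :: "'i set \<Rightarrow> ('i \<Rightarrow> 'i \<Rightarrow> bool) \<Rightarrow> bool" where
  "directed_set I r \<longleftrightarrow> I \<noteq> {} \<and> (\<forall>a\<in>I. r a a) \<and>
     (\<forall>a\<in>I. \<forall>b\<in>I. \<forall>c\<in>I. r a b \<and> r b c \<longrightarrow> r a c) \<and>
     (\<forall>a\<in>I. \<forall>b\<in>I. \<exists>c\<in>I. r a c \<and> r b c)"

definition fdecreases_to_zero :: "('a::real_vector \<Rightarrow> 'a \<Rightarrow> real) \<Rightarrow> 'i set \<Rightarrow> ('i \<Rightarrow> 'i \<Rightarrow> bool) \<Rightarrow> ('i \<Rightarrow> 'a) \<Rightarrow> bool" where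
  "fdecreases_to_zero \<mu> I r y \<longleftrightarrow>
     (\<forall>a\<in>I. \<forall>b\<in>I. r a b \<longrightarrow> fle \<mu> (y b) (y a)) \<and> is_finf \<mu> (y ` I) 0"

definition forder_converges :: "('a::real_vector \<Rightarrow> 'a \<Rightarrow> real) \<Rightarrow> 'i set \<Rightarrow> ('i \<Rightarrow> 'i \<Rightarrow> bool) \<Rightarrow> ('i \<Rightarrow> 'a) \<Rightarrow> 'a \<Rightarrow> bool" where
  "forder_converges \<mu> I r x l \<longleftrightarrow>
     (\<exists>y. fdecreases_to_zero \<mu> I r y \<and> (\<forall>a\<in>I. fle \<mu> (fabs \<mu> (x a - l)) (y a)))"

definition fuzzy_positive :: "('a::real_vector \<Rightarrow> 'a \<Rightarrow> real) \<Rightarrow> ('b::real_vector \<Rightarrow> 'b \<Rightarrow> real) \<Rightarrow> ('a \<Rightarrow> 'b) \<Rightarrow> bool" where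
  "fuzzy_positive \<mu> \<nu> T \<longleftrightarrow> (\<forall>x. fle \<mu> 0 x \<longrightarrow> fle \<nu> 0 (T x))"

definition FLb :: "('a::real_vector \<Rightarrow> 'a \<Rightarrow> real) \<Rightarrow> ('b::real_vector \<Rightarrow> 'b \<Rightarrow> real) \<Rightarrow> ('a \<Rightarrow> 'b) set" where
  "FLb \<mu> \<nu> = {T. linear T \<and> (\<forall>A. forder_bounded_set \<mu> A \<longrightarrow> forder_bounded_set \<nu> (T ` A))}"

definition op_le :: "('a::real_vector \<Rightarrow> 'a \<Rightarrow> real) \<Rightarrow> ('b::real_vector \<Rightarrow> 'b \<Rightarrow> real) \<Rightarrow> ('a \<Rightarrow> 'b) \<Rightarrow> ('a \<Rightarrow> 'b) \<Rightarrow> bool" where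
  "op_le \<mu> \<nu> S T \<longleftrightarrow> fuzzy_positive \<mu> \<nu> (\<lambda>x. T x - S x)"

definition op_abs :: "('a::real_vector \<Rightarrow> 'a \<Rightarrow> real) \<Rightarrow> ('b::real_vector \<Rightarrow> 'b \<Rightarrow> real) \<Rightarrow> ('a \<Rightarrow> 'b) \<Rightarrow> ('a \<Rightarrow> 'b)" where
  "op_abs \<mu> \<nu> S = sup_on (FLb \<mu> \<nu>) (op_le \<mu> \<nu>) {S, \<lambda>x. - S x}"

definition op_subspace :: "('a \<Rightarrow> 'b::real_vector) set \<Rightarrow> bool" where
  "op_subspace A \<longleftrightarrow> (\<lambda>x. 0) \<in> A \<and>
     (\<forall>S\<in>A. \<forall>R\<in>A. (\<lambda>x. S x + R x) \<in> A) \<and>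
     (\<forall>(c::real). \<forall>S\<in>A. (\<lambda>x. c *\<^sub>R S x) \<in> A)"

definition op_ideal :: "('a::real_vector \<Rightarrow> 'a \<Rightarrow> real) \<Rightarrow> ('b::real_vector \<Rightarrow> 'b \<Rightarrow> real) \<Rightarrow> ('a \<Rightarrow> 'b) set \<Rightarrow> bool" where
  "op_ideal \<mu> \<nu> A \<longleftrightarrow> A \<subseteq> FLb \<mu> \<nu> \<and> op_subspace A \<and>
     (\<forall>S R. S \<in> FLb \<mu> \<nu> \<and> R \<in> A \<and> op_le \<mu> \<nu> (op_abs \<mu> \<nu> S) (op_abs \<mu> \<nu> R) \<longrightarrow> S \<in> A)"

definition gen_ideal :: "('a::real_vector \<Rightarrow> 'a \<Rightarrow> real) \<Rightarrow> ('b::real_vector \<Rightarrow> 'b \<Rightarrow> real) \<Rightarrow> ('a \<Rightarrow> 'b) \<Rightarrow> ('a \<Rightarrow> 'b) set" where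
  "gen_ideal \<mu> \<nu> T = \<Inter>{A. op_ideal \<mu> \<nu> A \<and> T \<in> A}"

definition null_ideal :: "('a::real_vector \<Rightarrow> 'a \<Rightarrow> real) \<Rightarrow> ('b::real_vector \<Rightarrow> 'b \<Rightarrow> real) \<Rightarrow> ('a \<Rightarrow> 'b) \<Rightarrow> 'a set" where
  "null_ideal \<mu> \<nu> S = {x. op_abs \<mu> \<nu> S (fabs \<mu> x) = 0}"

text \<open>Fuzzy order continuity, for nets indexed by directed subsets of the index type \<open>'i\<close>.\<close>
definition fuzzy_order_continuous :: "'i itself \<Rightarrow> ('a::real_vector \<Rightarrow> 'a \<Rightarrow> real) \<Rightarrow> ('b::real_vector \<Rightarrow> 'b \<Rightarrow> real) \<Rightarrow> ('a \<Rightarrow> 'b) \<Rightarrow> bool" where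
  "fuzzy_order_continuous _ \<mu> \<nu> T \<longleftrightarrow>
     (\<forall>(I::'i set) r x. directed_set I r \<and> forder_converges \<mu> I r x 0 \<longrightarrow>
        forder_converges \<nu> I r (\<lambda>a. T (x a)) 0)"

definition fuzzy_sigma_order_continuous :: "('a::real_vector \<Rightarrow> 'a \<Rightarrow> real) \<Rightarrow> ('b::real_vector \<Rightarrow> 'b \<Rightarrow> real) \<Rightarrow> ('a \<Rightarrow> 'b) \<Rightarrow> bool" where
  "fuzzy_sigma_order_continuous \<mu> \<nu> T \<longleftrightarrow>
     (\<forall>x::nat \<Rightarrow> 'a. forder_converges \<mu> UNIV (\<le>) x 0 \<longrightarrow>
        forder_converges \<nu> UNIV (\<le>) (\<lambda>n. T (x n)) 0)"

end

(*
  The modulus of T is given by the Riesz-Kantorovich formula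
  |T| x = sup {T y - T (x - y) | 0 <= y <= x} for x >= 0.  On a fixed directed set,
  T preserves order convergence to 0 iff |T| y_a decreases to 0 whenever y_a does, and every
  S in A_T inherits this from T because |S| <= c |T|.  Hence, if T is (sigma-)order
  continuous, each null ideal N_S is closed under suprema of increasing nets (sequences):
  if 0 <= v_a in N_S increase to s, then s - v_a decreases to 0 and |S|(s - v_a) = |S| s.
  Bands are exactly the ideals closed under increasing nets indexed like subsets of E (the
  positive elements of the ideal below s^+ form such a net with supremum s^+), and sigma-ideals
  are the ideals closed under increasing sequences.
  Conversely, let y_a decrease to 0 and let l be a lower bound of the |T| y_a.  For fixed b
  and n the net v_a = (y_b - n y_a)^+ increases to y_b; removing from |T| its component along
  the band generated by the v_a gives an operator in A_T that annihilates every v_a.  If its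
  null ideal is closed under increasing suprema it annihilates y_b too, which yields
  n l <= |T| y_b for all n, hence l <= 0 by the Archimedean property of F.
*)

theory Submission
  imports Defs
begin

definition closed_under_increasing_sups ::
    "('a::real_vector \<Rightarrow> 'a \<Rightarrow> real) \<Rightarrow> 'i set \<Rightarrow> ('i \<Rightarrow> 'i \<Rightarrow> bool) \<Rightarrow> 'a set \<Rightarrow> bool" where
  "closed_under_increasing_sups \<mu> I r N \<longleftrightarrow>
     (\<forall>v s. (\<forall>a\<in>I. fle \<mu> 0 (v a) \<and> v a \<in> N) \<and> (\<forall>a\<in>I. \<forall>b\<in>I. r a b \<longrightarrow> fle \<mu> (v a) (v b)) \<and>
        is_fsup \<mu> (v ` I) s \<longrightarrow> s \<in> N)"

lemma fuzzy_band_closed_under_increasing_sups: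
  assumes "fuzzy_band \<mu> N"
  shows "closed_under_increasing_sups \<mu> I r N"
  unfolding closed_under_increasing_sups_def
proof (intro allI impI)
  fix v s assume "(\<forall>a\<in>I. fle \<mu> 0 (v a) \<and> v a \<in> N) \<and>
    (\<forall>a\<in>I. \<forall>b\<in>I. r a b \<longrightarrow> fle \<mu> (v a) (v b)) \<and> is_fsup \<mu> (v ` I) s"
  then have "v ` I \<subseteq> N \<and> is_fsup \<mu> (v ` I) s"
    by blast
  with assms show "s \<in> N"
    unfolding fuzzy_band_def by blast
qed

lemma fuzzy_sigma_ideal_iff_closed_under_increasing_sups:
  "fuzzy_sigma_ideal \<mu> N \<longleftrightarrow> fuzzy_ideal \<mu> N \<and> closed_under_increasing_sups \<mu> (UNIV :: nat set) (\<le>) N"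
  unfolding fuzzy_sigma_ideal_def closed_under_increasing_sups_def fincreases_to_def by simp

definition preserves_order_convergence ::
    "('a::real_vector \<Rightarrow> 'a \<Rightarrow> real) \<Rightarrow> ('b::real_vector \<Rightarrow> 'b \<Rightarrow> real) \<Rightarrow> 'i set \<Rightarrow>
      ('i \<Rightarrow> 'i \<Rightarrow> bool) \<Rightarrow> ('a \<Rightarrow> 'b) \<Rightarrow> bool" where
  "preserves_order_convergence \<mu> \<nu> I r T \<longleftrightarrow>
     (\<forall>x. forder_converges \<mu> I r x 0 \<longrightarrow> forder_converges \<nu> I r (\<lambda>a. T (x a)) 0)"

lemma fuzzy_order_continuous_iff:
  "fuzzy_order_continuous TYPE('i) \<mu> \<nu> T \<longleftrightarrow>
     (\<forall>(I :: 'i set) r. directed_set I r \<longrightarrow> preserves_order_convergence \<mu> \<nu> I r T)"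
  unfolding fuzzy_order_continuous_def preserves_order_convergence_def by blast

lemma fuzzy_sigma_order_continuous_iff:
  "fuzzy_sigma_order_continuous \<mu> \<nu> T \<longleftrightarrow> preserves_order_convergence \<mu> \<nu> (UNIV :: nat set) (\<le>) T"
  unfolding fuzzy_sigma_order_continuous_def preserves_order_convergence_def ..

lemma directed_set_nat: "directed_set (UNIV :: nat set) (\<le>)"
  unfolding directed_set_def by (auto intro: le_cases)

section \<open>Fuzzy Riesz spaces\<close>

lemma sup_on_eqI:
  assumes "is_sup_on C le A s"
    and "\<And>a b. a \<in> C \<Longrightarrow> b \<in> C \<Longrightarrow> le a b \<Longrightarrow> le b a \<Longrightarrow> a = b"
  shows "sup_on C le A = s"
  unfolding sup_on_def
proof (rule the_equality)
  show "is_sup_on C le A s" by fact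
  fix t assume "is_sup_on C le A t"
  with assms show "t = s" unfolding is_sup_on_def is_ub_on_def by blast
qed

locale fuzzy_riesz_space =
  fixes \<mu> :: "'a::real_vector \<Rightarrow> 'a \<Rightarrow> real"
  assumes riesz: "fuzzy_riesz \<mu>"
begin

lemma fuzzy_order: "fuzzy_order \<mu>"
  using riesz unfolding fuzzy_riesz_def fuzzy_ordered_linear_space_def by auto

lemma fle_refl [simp, intro]: "fle \<mu> x x"
  using fuzzy_order unfolding fuzzy_order_def fle_def by auto

lemma fle_antisym: "fle \<mu> x y \<Longrightarrow> fle \<mu> y x \<Longrightarrow> x = y"
  using fuzzy_order unfolding fuzzy_order_def fle_def by auto

lemma fle_trans [trans]:
  assumes "fle \<mu> x y" "fle \<mu> y z"
  shows "fle \<mu> x z"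
proof -
  have bdd: "bdd_above (range (\<lambda>w. min (\<mu> x w) (\<mu> w z)))"
    using fuzzy_order unfolding fuzzy_order_def
    by (intro bdd_aboveI[of _ 1]) (auto simp: min_le_iff_disj)
  have "min (\<mu> x y) (\<mu> y z) \<le> (SUP w. min (\<mu> x w) (\<mu> w z))"
    by (rule cSUP_upper[OF _ bdd]) simp
  also have "\<dots> \<le> \<mu> x z"
    using fuzzy_order unfolding fuzzy_order_def by auto
  finally show ?thesis
    using assms unfolding fle_def by auto
qed

lemma fle_add_right: "fle \<mu> x y \<Longrightarrow> fle \<mu> (x + z) (y + z)"
  using riesz unfolding fuzzy_riesz_def fuzzy_ordered_linear_space_def fle_def
  by (smt (verit))

lemma fle_add_right_iff: "fle \<mu> (x + z) (y + z) \<longleftrightarrow> fle \<mu> x y"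
  using fle_add_right[of x y z] fle_add_right[of "x + z" "y + z" "- z"] by auto

lemma fle_scaleR: "0 < c \<Longrightarrow> fle \<mu> x y \<Longrightarrow> fle \<mu> (c *\<^sub>R x) (c *\<^sub>R y)"
  using riesz unfolding fuzzy_riesz_def fuzzy_ordered_linear_space_def fle_def
  by (smt (verit))

lemma fle_scaleR_iff: "0 < c \<Longrightarrow> fle \<mu> (c *\<^sub>R x) (c *\<^sub>R y) \<longleftrightarrow> fle \<mu> x y"
  using fle_scaleR[of c x y] fle_scaleR[of "inverse c" "c *\<^sub>R x" "c *\<^sub>R y"] by auto

lemma fle_scaleR_nonneg: "0 \<le> c \<Longrightarrow> fle \<mu> x y \<Longrightarrow> fle \<mu> (c *\<^sub>R x) (c *\<^sub>R y)"
  using fle_scaleR[of c x y] by (cases "c = 0") auto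

lemma fle_iff_diff_nonneg: "fle \<mu> x y \<longleftrightarrow> fle \<mu> 0 (y - x)"
  using fle_add_right_iff[of x "- x" y] by (simp add: algebra_simps)

lemma fle_iff_diff_nonpos: "fle \<mu> x y \<longleftrightarrow> fle \<mu> (x - y) 0"
  using fle_add_right_iff[of x "- y" y] by (simp add: algebra_simps)

lemma fle_minus: "fle \<mu> x y \<Longrightarrow> fle \<mu> (- y) (- x)"
  using fle_add_right_iff[of x "- x - y" y] by (simp add: algebra_simps)

lemma fle_minus_iff: "fle \<mu> (- y) (- x) \<longleftrightarrow> fle \<mu> x y"
  using fle_minus[of x y] fle_minus[of "- y" "- x"] by auto

lemma fle_scaleR_nonpos: "c \<le> 0 \<Longrightarrow> fle \<mu> x y \<Longrightarrow> fle \<mu> (c *\<^sub>R y) (c *\<^sub>R x)"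
  using fle_scaleR_nonneg[of "- c" x y] fle_minus by fastforce

lemma fle_add_mono: "fle \<mu> a b \<Longrightarrow> fle \<mu> c d \<Longrightarrow> fle \<mu> (a + c) (b + d)"
  using fle_add_right[of a b c] fle_add_right[of c d b] fle_trans by (auto simp: add.commute)

lemma fle_add_nonneg: "fle \<mu> 0 a \<Longrightarrow> fle \<mu> 0 b \<Longrightarrow> fle \<mu> 0 (a + b)"
  using fle_add_mono[of 0 a 0 b] by simp

lemma fle_add_nonneg_right: "fle \<mu> 0 b \<Longrightarrow> fle \<mu> a (a + b)"
  using fle_add_mono[of a a 0 b] by simp

lemma fle_diff_nonneg: "fle \<mu> 0 b \<Longrightarrow> fle \<mu> (a - b) a"
  using fle_add_nonneg_right[of b "a - b"] by simp

lemma fle_diff_swap: "fle \<mu> a (c - b) \<Longrightarrow> fle \<mu> b (c - a)"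
  using fle_add_right[of a "c - b" "b - a"] by (simp add: algebra_simps)

lemma fle_add_imp_fle_diff: "fle \<mu> (a + b) c \<Longrightarrow> fle \<mu> b (c - a)"
  using fle_add_right[of "a + b" c "- a"] by (simp add: algebra_simps)

lemma fle_diff_imp_fle_add: "fle \<mu> b (c - a) \<Longrightarrow> fle \<mu> (a + b) c"
  using fle_add_right[of b "c - a" a] by (simp add: algebra_simps)

lemma fle_add_imp_diff_fle: "fle \<mu> a (b + c) \<Longrightarrow> fle \<mu> (a - b) c"
  using fle_add_right[of a "b + c" "- b"] by (simp add: algebra_simps)

lemma fle_scaleR_left_mono:
  assumes "fle \<mu> 0 p" "c \<le> d"
  shows "fle \<mu> (c *\<^sub>R p) (d *\<^sub>R p)"
  using fle_scaleR_nonneg[of "d - c" 0 p] assms fle_iff_diff_nonneg[of "c *\<^sub>R p" "d *\<^sub>R p"]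
  by (simp add: scaleR_diff_left)

definition fjoin :: "'a \<Rightarrow> 'a \<Rightarrow> 'a" where
  "fjoin x y = sup_on UNIV (fle \<mu>) {x, y}"

definition fmeet :: "'a \<Rightarrow> 'a \<Rightarrow> 'a" where
  "fmeet x y = - fjoin (- x) (- y)"

lemma fjoin_is_sup: "is_fsup \<mu> {x, y} (fjoin x y)"
proof -
  obtain s where s: "is_fsup \<mu> {x, y} s"
    using riesz unfolding fuzzy_riesz_def by blast
  have "fjoin x y = s"
    unfolding fjoin_def by (rule sup_on_eqI[OF s]) (auto intro: fle_antisym)
  with s show ?thesis by simp
qed

lemma fjoin_upper1 [simp, intro]: "fle \<mu> x (fjoin x y)"
  and fjoin_upper2 [simp, intro]: "fle \<mu> y (fjoin x y)"
  using fjoin_is_sup[of x y] unfolding is_sup_on_def is_ub_on_def by auto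

lemma fjoin_least: "fle \<mu> x z \<Longrightarrow> fle \<mu> y z \<Longrightarrow> fle \<mu> (fjoin x y) z"
  using fjoin_is_sup[of x y] unfolding is_sup_on_def is_ub_on_def by auto

lemma fmeet_lower1 [simp, intro]: "fle \<mu> (fmeet x y) x"
  and fmeet_lower2 [simp, intro]: "fle \<mu> (fmeet x y) y"
  unfolding fmeet_def using fle_minus_iff by fastforce+

lemma fmeet_greatest: "fle \<mu> z x \<Longrightarrow> fle \<mu> z y \<Longrightarrow> fle \<mu> z (fmeet x y)"
  unfolding fmeet_def using fjoin_least[of "- x" "- z" "- y"] fle_minus fle_minus_iff
  by (metis minus_minus)

lemma fjoin_commute: "fjoin x y = fjoin y x"
  by (intro fle_antisym fjoin_least) auto

lemma fmeet_commute: "fmeet x y = fmeet y x"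
  by (intro fle_antisym fmeet_greatest) auto

lemma fjoin_mono: "fle \<mu> a b \<Longrightarrow> fle \<mu> c d \<Longrightarrow> fle \<mu> (fjoin a c) (fjoin b d)"
  by (intro fjoin_least) (meson fjoin_upper1 fjoin_upper2 fle_trans)+

lemma fmeet_mono: "fle \<mu> a b \<Longrightarrow> fle \<mu> c d \<Longrightarrow> fle \<mu> (fmeet a c) (fmeet b d)"
  by (intro fmeet_greatest) (meson fmeet_lower1 fmeet_lower2 fle_trans)+

lemma fjoin_absorb1: "fle \<mu> y x \<Longrightarrow> fjoin x y = x"
  by (intro fle_antisym fjoin_least) auto

lemma fmeet_absorb1: "fle \<mu> x y \<Longrightarrow> fmeet x y = x"
  by (intro fle_antisym fmeet_greatest) auto

lemma fmeet_absorb2: "fle \<mu> y x \<Longrightarrow> fmeet x y = y"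
  by (intro fle_antisym fmeet_greatest) auto

lemma fjoin_add: "fjoin (x + z) (y + z) = fjoin x y + z"
proof (rule fle_antisym)
  show "fle \<mu> (fjoin (x + z) (y + z)) (fjoin x y + z)"
    by (intro fjoin_least) (auto simp: fle_add_right_iff)
  have "fle \<mu> (fjoin x y) (fjoin (x + z) (y + z) - z)"
    using fle_add_right_iff[of _ z "fjoin (x + z) (y + z) - z"] by (intro fjoin_least) auto
  then show "fle \<mu> (fjoin x y + z) (fjoin (x + z) (y + z))"
    using fle_add_right_iff[of "fjoin x y" z "fjoin (x + z) (y + z) - z"] by simp
qed

lemma fmeet_add: "fmeet (x + z) (y + z) = fmeet x y + z"
  unfolding fmeet_def using fjoin_add[of "- x" "- z" "- y"] by (simp add: algebra_simps)

lemma fjoin_scaleR: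
  assumes "0 < c"
  shows "fjoin (c *\<^sub>R x) (c *\<^sub>R y) = c *\<^sub>R fjoin x y"
proof (rule fle_antisym)
  show "fle \<mu> (fjoin (c *\<^sub>R x) (c *\<^sub>R y)) (c *\<^sub>R fjoin x y)"
    by (intro fjoin_least) (auto simp: fle_scaleR_iff assms)
  have "fle \<mu> (fjoin x y) (inverse c *\<^sub>R fjoin (c *\<^sub>R x) (c *\<^sub>R y))"
  proof (intro fjoin_least)
    show "fle \<mu> x (inverse c *\<^sub>R fjoin (c *\<^sub>R x) (c *\<^sub>R y))"
      using fle_scaleR[of "inverse c" "c *\<^sub>R x" "fjoin (c *\<^sub>R x) (c *\<^sub>R y)"] assms by simp
    show "fle \<mu> y (inverse c *\<^sub>R fjoin (c *\<^sub>R x) (c *\<^sub>R y))"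
      using fle_scaleR[of "inverse c" "c *\<^sub>R y" "fjoin (c *\<^sub>R x) (c *\<^sub>R y)"] assms by simp
  qed
  then show "fle \<mu> (c *\<^sub>R fjoin x y) (fjoin (c *\<^sub>R x) (c *\<^sub>R y))"
    using fle_scaleR[of c "fjoin x y"] assms by fastforce
qed

lemma fmeet_scaleR: "0 < c \<Longrightarrow> fmeet (c *\<^sub>R x) (c *\<^sub>R y) = c *\<^sub>R fmeet x y"
  unfolding fmeet_def using fjoin_scaleR[of c "- x" "- y"] by simp

lemma fmeet_eq: "fmeet x y = x + y - fjoin x y"
proof -
  have "fjoin (- x + (x + y)) (- y + (x + y)) = fjoin (- x) (- y) + (x + y)"
    by (rule fjoin_add)
  then show ?thesis
    unfolding fmeet_def by (simp add: fjoin_commute algebra_simps)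
qed

definition fpos :: "'a \<Rightarrow> 'a" where
  "fpos x = fjoin x 0"

definition fneg :: "'a \<Rightarrow> 'a" where
  "fneg x = fjoin (- x) 0"

lemma fpos_nonneg [simp, intro]: "fle \<mu> 0 (fpos x)"
  and fneg_nonneg [simp, intro]: "fle \<mu> 0 (fneg x)"
  and fpos_ge [simp, intro]: "fle \<mu> x (fpos x)"
  unfolding fpos_def fneg_def by simp_all

lemma fpos_eq_add_fneg: "fpos x = x + fneg x"
  using fjoin_add[of "- x" x 0] unfolding fpos_def fneg_def by (simp add: fjoin_commute add.commute)

lemma fpos_diff_fneg: "fpos x - fneg x = x"
  using fpos_eq_add_fneg[of x] by simp

lemma fpos_mono: "fle \<mu> x y \<Longrightarrow> fle \<mu> (fpos x) (fpos y)"
  unfolding fpos_def by (rule fjoin_mono) auto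

lemma fneg_antimono: "fle \<mu> x y \<Longrightarrow> fle \<mu> (fneg y) (fneg x)"
  unfolding fneg_def by (rule fjoin_mono) (auto simp: fle_minus)

lemma fpos_scaleR: "0 < c \<Longrightarrow> fpos (c *\<^sub>R x) = c *\<^sub>R fpos x"
  unfolding fpos_def using fjoin_scaleR[of c x 0] by simp

lemma fmeet_fpos_fneg: "fmeet (fpos x) (fneg x) = 0"
proof -
  have "fmeet (fpos x) (fneg x) = fmeet (x + fneg x) (0 + fneg x)"
    using fpos_eq_add_fneg by simp
  also have "\<dots> = fmeet x 0 + fneg x"
    by (rule fmeet_add)
  also have "fmeet x 0 = - fneg x"
    unfolding fmeet_def fneg_def by simp
  finally show ?thesis by simp
qed

lemma fabs_eq_fjoin: "fabs \<mu> x = fjoin x (- x)"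
  unfolding fabs_def fjoin_def ..

lemma fabs_eq_fpos_add_fneg: "fabs \<mu> x = fpos x + fneg x"
proof -
  have "fjoin (x + x) (- x + x) = fjoin x (- x) + x"
    by (rule fjoin_add)
  moreover have "fjoin (2 *\<^sub>R x) (2 *\<^sub>R 0) = 2 *\<^sub>R fjoin x 0"
    by (rule fjoin_scaleR) simp
  ultimately have "fjoin x (- x) = 2 *\<^sub>R fpos x - x"
    unfolding fpos_def by (simp add: scaleR_2 algebra_simps)
  then show ?thesis
    unfolding fabs_eq_fjoin using fpos_eq_add_fneg[of x] by (simp add: scaleR_2 algebra_simps)
qed

lemma fabs_nonneg [simp, intro]: "fle \<mu> 0 (fabs \<mu> x)"
  unfolding fabs_eq_fpos_add_fneg by (intro fle_add_nonneg) auto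

lemma fabs_ge [simp, intro]: "fle \<mu> x (fabs \<mu> x)"
  and fabs_ge_minus [simp, intro]: "fle \<mu> (- x) (fabs \<mu> x)"
  unfolding fabs_eq_fjoin by simp_all

lemma fabs_least: "fle \<mu> x y \<Longrightarrow> fle \<mu> (- x) y \<Longrightarrow> fle \<mu> (fabs \<mu> x) y"
  unfolding fabs_eq_fjoin by (rule fjoin_least)

lemma fabs_of_nonneg: "fle \<mu> 0 x \<Longrightarrow> fabs \<mu> x = x"
  unfolding fabs_eq_fjoin by (rule fjoin_absorb1) (use fle_minus[of 0 x] fle_trans in auto)

lemma fabs_triangle: "fle \<mu> (fabs \<mu> (x + y)) (fabs \<mu> x + fabs \<mu> y)"
  using fle_add_mono[OF fabs_ge fabs_ge, of x y] fle_add_mono[OF fabs_ge_minus fabs_ge_minus, of x y]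
  by (intro fabs_least) auto

lemma fabs_scaleR: "fabs \<mu> (c *\<^sub>R x) = \<bar>c\<bar> *\<^sub>R fabs \<mu> x"
proof -
  have pos: "fabs \<mu> (c *\<^sub>R x) = c *\<^sub>R fabs \<mu> x" if "0 < c" for c
    unfolding fabs_eq_fjoin using fjoin_scaleR[OF that, of x "- x"] by simp
  consider "0 < c" | "c = 0" | "0 < - c" by linarith
  then show ?thesis
  proof cases
    case 3
    then show ?thesis
      using pos[OF 3] by (simp add: fabs_eq_fjoin fjoin_commute)
  qed (simp_all add: pos fabs_of_nonneg)
qed

lemma fabs_diff_le: "fle \<mu> 0 a \<Longrightarrow> fle \<mu> 0 b \<Longrightarrow> fle \<mu> (fabs \<mu> (a - b)) (a + b)"
proof (intro fabs_least)
  assume a: "fle \<mu> 0 a" and b: "fle \<mu> 0 b"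
  have "fle \<mu> (- b) b"
    using fle_minus[OF b] b fle_trans by fastforce
  then show "fle \<mu> (a - b) (a + b)"
    using fle_add_mono[of a a "- b" b] by simp
  have "fle \<mu> (- a) a"
    using fle_minus[OF a] a fle_trans by fastforce
  then show "fle \<mu> (- (a - b)) (a + b)"
    using fle_add_mono[of "- a" a b b] by (simp add: algebra_simps)
qed

lemma fmeet_nonneg: "fle \<mu> 0 x \<Longrightarrow> fle \<mu> 0 y \<Longrightarrow> fle \<mu> 0 (fmeet x y)"
  by (rule fmeet_greatest)

lemma fmeet_add_le:
  assumes p: "fle \<mu> 0 p" and q: "fle \<mu> 0 q" and w: "fle \<mu> 0 w"
  shows "fle \<mu> (fmeet (p + q) w) (fmeet p w + fmeet q w)"
proof -
  let ?r = "fmeet (p + q) w - fmeet p w"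
  have "fle \<mu> (fmeet (p + q) w - q) (fmeet p w)"
  proof (intro fmeet_greatest)
    show "fle \<mu> (fmeet (p + q) w - q) p"
      using fle_add_right[OF fmeet_lower1[of "p + q" w], of "- q"] by simp
    show "fle \<mu> (fmeet (p + q) w - q) w"
      using fmeet_lower2[of "p + q" w] fle_diff_nonneg[OF q] fle_trans by blast
  qed
  then have "fle \<mu> ?r q"
    by (metis fle_diff_swap diff_add_cancel add_diff_cancel_left')
  moreover have "fle \<mu> ?r w"
    using fmeet_lower2[of "p + q" w] fle_diff_nonneg[OF fmeet_nonneg[OF p w]] fle_trans by blast
  ultimately have "fle \<mu> ?r (fmeet q w)"
    by (rule fmeet_greatest)
  then show ?thesis
    using fle_add_right_iff[of ?r "fmeet p w" "fmeet q w"] by (simp add: add.commute)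
qed

lemma fmeet_scaleR_disjoint:
  assumes "fle \<mu> 0 p" "fle \<mu> 0 q" "fmeet p q = 0" "0 < c" "0 < d"
  shows "fmeet (c *\<^sub>R p) (d *\<^sub>R q) = 0"
proof (rule fle_antisym)
  let ?m = "max c d"
  have "fle \<mu> (fmeet (c *\<^sub>R p) (d *\<^sub>R q)) (fmeet (?m *\<^sub>R p) (?m *\<^sub>R q))"
    by (rule fmeet_mono) (auto intro!: fle_scaleR_left_mono simp: assms)
  also have "fmeet (?m *\<^sub>R p) (?m *\<^sub>R q) = 0"
    using fmeet_scaleR[of ?m p q] assms by simp
  finally show "fle \<mu> (fmeet (c *\<^sub>R p) (d *\<^sub>R q)) 0" .
  show "fle \<mu> 0 (fmeet (c *\<^sub>R p) (d *\<^sub>R q))"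
    using assms fle_scaleR_nonneg[of c 0 p] fle_scaleR_nonneg[of d 0 q] by (intro fmeet_nonneg) auto
qed

lemma fmeet_fpos_diff_le:
  assumes b: "fle \<mu> 0 b" and ba: "fle \<mu> b a" and n: "0 < n" and t: "0 < t"
  shows "fle \<mu> (fmeet a (t *\<^sub>R fpos (a - n *\<^sub>R b))) (a - b + inverse n *\<^sub>R a)"
proof -
  let ?v = "fpos (a - n *\<^sub>R b)"
  let ?d = "a - b + inverse n *\<^sub>R a"
  let ?e = "fpos (a - ?d)"
  have a: "fle \<mu> 0 a"
    using b ba fle_trans by blast
  have tv: "fle \<mu> 0 (t *\<^sub>R ?v)"
    using fle_scaleR[OF t, of 0 ?v] by simp
  have d: "fle \<mu> 0 ?d"
    using fle_iff_diff_nonneg[of b a] ba fle_scaleR[of "inverse n" 0 a] n a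
    by (intro fle_add_nonneg) auto
  have ade: "fle \<mu> a (?d + ?e)"
    using fpos_ge[of "a - ?d"] fle_add_right[of "a - ?d" ?e ?d] by (simp add: algebra_simps)
  have "a - ?d = inverse n *\<^sub>R (- (a - n *\<^sub>R b))"
    using n by (simp add: algebra_simps)
  then have e_eq: "?e = inverse n *\<^sub>R fneg (a - n *\<^sub>R b)"
    using fpos_scaleR[of "inverse n" "- (a - n *\<^sub>R b)"] n unfolding fpos_def fneg_def by simp
  have disjoint: "fmeet ?e (t *\<^sub>R ?v) = 0"
    unfolding e_eq
    by (rule fmeet_scaleR_disjoint) (use n t fmeet_fpos_fneg[of "a - n *\<^sub>R b"] fmeet_commute in auto)
  have "fle \<mu> (fmeet a (t *\<^sub>R ?v)) (fmeet (?d + ?e) (t *\<^sub>R ?v))"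
    by (rule fmeet_mono[OF ade fle_refl])
  also have "fle \<mu> \<dots> (fmeet ?d (t *\<^sub>R ?v) + fmeet ?e (t *\<^sub>R ?v))"
    by (rule fmeet_add_le[OF d fpos_nonneg tv])
  also have "fle \<mu> \<dots> ?d"
    unfolding disjoint by simp
  finally show ?thesis .
qed

lemma fdecreases_to_zero_nonneg: "fdecreases_to_zero \<mu> I r y \<Longrightarrow> a \<in> I \<Longrightarrow> fle \<mu> 0 (y a)"
  unfolding fdecreases_to_zero_def is_inf_on_def is_lb_on_def by auto

lemma fdecreases_to_zero_antimono:
  "fdecreases_to_zero \<mu> I r y \<Longrightarrow> a \<in> I \<Longrightarrow> b \<in> I \<Longrightarrow> r a b \<Longrightarrow> fle \<mu> (y b) (y a)"
  unfolding fdecreases_to_zero_def by auto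

lemma fdecreases_to_zero_greatest:
  "fdecreases_to_zero \<mu> I r y \<Longrightarrow> (\<And>a. a \<in> I \<Longrightarrow> fle \<mu> z (y a)) \<Longrightarrow> fle \<mu> z 0"
  unfolding fdecreases_to_zero_def is_inf_on_def is_lb_on_def by auto

lemma fdecreases_to_zero_tail:
  assumes dir: "directed_set I r" and y: "fdecreases_to_zero \<mu> I r y" and b: "b \<in> I"
    and tail: "\<And>a. a \<in> I \<Longrightarrow> r b a \<Longrightarrow> fle \<mu> z (y a)"
  shows "fle \<mu> z 0"
proof (rule fdecreases_to_zero_greatest[OF y])
  fix a assume a: "a \<in> I"
  then obtain c where c: "c \<in> I" "r b c" "r a c"
    using dir b unfolding directed_set_def by blast
  show "fle \<mu> z (y a)"
    using tail[OF c(1,2)] fdecreases_to_zero_antimono[OF y a c(1,3)] fle_trans by blast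
qed

lemma is_finf_zeroI:
  assumes "\<And>a. a \<in> I \<Longrightarrow> fle \<mu> 0 (y a)"
    and "\<And>l. (\<And>a. a \<in> I \<Longrightarrow> fle \<mu> l (y a)) \<Longrightarrow> fle \<mu> l 0"
  shows "is_finf \<mu> (y ` I) 0"
  using assms unfolding is_inf_on_def is_lb_on_def by auto

lemma is_finf_zeroD: "is_finf \<mu> (y ` I) 0 \<Longrightarrow> (\<And>a. a \<in> I \<Longrightarrow> fle \<mu> l (y a)) \<Longrightarrow> fle \<mu> l 0"
  unfolding is_inf_on_def is_lb_on_def by auto

lemma fdecreases_to_zero_scaleR:
  assumes y: "fdecreases_to_zero \<mu> I r y" and c: "0 < c"
  shows "fdecreases_to_zero \<mu> I r (\<lambda>a. c *\<^sub>R y a)"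
  unfolding fdecreases_to_zero_def
proof (intro conjI ballI impI is_finf_zeroI)
  fix a b assume "a \<in> I" "b \<in> I" "r a b"
  then show "fle \<mu> (c *\<^sub>R y b) (c *\<^sub>R y a)"
    using fdecreases_to_zero_antimono[OF y] fle_scaleR[OF c] by blast
next
  fix a assume "a \<in> I"
  then show "fle \<mu> 0 (c *\<^sub>R y a)"
    using fdecreases_to_zero_nonneg[OF y] fle_scaleR[OF c, of 0] by auto
next
  fix l assume "\<And>a. a \<in> I \<Longrightarrow> fle \<mu> l (c *\<^sub>R y a)"
  then have "\<And>a. a \<in> I \<Longrightarrow> fle \<mu> (inverse c *\<^sub>R l) (y a)"
    using fle_scaleR[of "inverse c" l] c by fastforce
  then have "fle \<mu> (inverse c *\<^sub>R l) 0"
    by (rule fdecreases_to_zero_greatest[OF y])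
  then show "fle \<mu> l 0"
    using fle_scaleR[OF c, of "inverse c *\<^sub>R l" 0] c by simp
qed

lemma fdecreases_to_zero_sup_diff:
  assumes mono: "\<forall>a\<in>I. \<forall>b\<in>I. r a b \<longrightarrow> fle \<mu> (v a) (v b)" and s: "is_fsup \<mu> (v ` I) s"
  shows "fdecreases_to_zero \<mu> I r (\<lambda>a. s - v a)"
  unfolding fdecreases_to_zero_def
proof (intro conjI ballI impI is_finf_zeroI)
  fix a c assume "a \<in> I" "c \<in> I" "r a c"
  then have "fle \<mu> (- v c) (- v a)"
    using mono fle_minus by blast
  from fle_add_right[OF this, of s] show "fle \<mu> (s - v c) (s - v a)"
    by (simp add: algebra_simps)
next
  fix a assume "a \<in> I"
  then have "fle \<mu> (v a) s"
    using s unfolding is_sup_on_def is_ub_on_def by blast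
  then show "fle \<mu> 0 (s - v a)"
    using fle_iff_diff_nonneg[of "v a" s] by simp
next
  fix l assume "\<And>a. a \<in> I \<Longrightarrow> fle \<mu> l (s - v a)"
  then have "\<forall>q\<in>v ` I. fle \<mu> q (s - l)"
    using fle_diff_swap by blast
  then have "fle \<mu> s (s - l)"
    using s unfolding is_sup_on_def is_ub_on_def by blast
  then show "fle \<mu> l 0"
    using fle_diff_swap[of s s l] by simp
qed

lemma fmeet_diff_forder_converges:
  assumes y: "fdecreases_to_zero \<mu> I r y" and u: "fle \<mu> 0 u" and v: "fle \<mu> 0 v"
  shows "forder_converges \<mu> I r (\<lambda>a. fmeet u (y a) - fmeet v (y a)) 0"
  unfolding forder_converges_def
proof (intro exI conjI ballI)
  show "fdecreases_to_zero \<mu> I r (\<lambda>a. 2 *\<^sub>R y a)"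
    by (rule fdecreases_to_zero_scaleR[OF y]) simp
  fix a assume "a \<in> I"
  then have ya: "fle \<mu> 0 (y a)"
    by (rule fdecreases_to_zero_nonneg[OF y])
  have "fle \<mu> (fabs \<mu> (fmeet u (y a) - fmeet v (y a))) (fmeet u (y a) + fmeet v (y a))"
    using u v ya by (intro fabs_diff_le fmeet_nonneg)
  also have "fle \<mu> \<dots> (y a + y a)"
    by (intro fle_add_mono) auto
  finally show "fle \<mu> (fabs \<mu> (fmeet u (y a) - fmeet v (y a) - 0)) (2 *\<^sub>R y a)"
    by (simp add: scaleR_2)
qed

lemma diff_fmeet_add_le:
  assumes u: "fle \<mu> 0 u" and v: "fle \<mu> 0 v" and w: "fle \<mu> 0 w" "fle \<mu> w (u + v)"
  shows "fle \<mu> ((u - fmeet u w) + (v - fmeet v w)) (u + v - w)"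
proof -
  have "fle \<mu> w (fmeet u w + fmeet v w)"
    using fmeet_add_le[OF u v w(1)] fmeet_absorb2[OF w(2)] by simp
  then show ?thesis
    using fle_minus fle_add_right[of _ _ "u + v"] by (fastforce simp: algebra_simps)
qed

lemma fuzzy_ideal_solid:
  "fuzzy_ideal \<mu> N \<Longrightarrow> fle \<mu> (fabs \<mu> x) (fabs \<mu> y) \<Longrightarrow> y \<in> N \<Longrightarrow> x \<in> N"
  unfolding fuzzy_ideal_def by blast

lemma fuzzy_ideal_subspace: "fuzzy_ideal \<mu> N \<Longrightarrow> subspace N"
  unfolding fuzzy_ideal_def by blast

lemma fpos_mem_fuzzy_ideal:
  assumes N: "fuzzy_ideal \<mu> N" and b: "b \<in> N"
  shows "fpos b \<in> N"
proof (rule fuzzy_ideal_solid[OF N _ b])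
  show "fle \<mu> (fabs \<mu> (fpos b)) (fabs \<mu> b)"
    unfolding fabs_of_nonneg[OF fpos_nonneg]
    unfolding fabs_eq_fpos_add_fneg by (rule fle_add_nonneg_right) simp
qed

lemma fneg_mem_fuzzy_ideal_if_ge:
  assumes N: "fuzzy_ideal \<mu> N" and b: "b \<in> N" and bs: "fle \<mu> b s"
  shows "fneg s \<in> N"
proof (rule fuzzy_ideal_solid[OF N _ b])
  have "fle \<mu> (fneg s) (fneg b)"
    by (rule fneg_antimono[OF bs])
  also have "fle \<mu> (fneg b) (fabs \<mu> b)"
    unfolding fabs_eq_fpos_add_fneg using fle_add_nonneg_right[of "fpos b" "fneg b"]
    by (simp add: add.commute)
  finally show "fle \<mu> (fabs \<mu> (fneg s)) (fabs \<mu> b)"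
    by (simp add: fabs_of_nonneg)
qed

lemma fjoin_mem_fuzzy_ideal:
  assumes N: "fuzzy_ideal \<mu> N" and x: "fle \<mu> 0 x" "x \<in> N" and y: "fle \<mu> 0 y" "y \<in> N"
  shows "fjoin x y \<in> N"
proof (rule fuzzy_ideal_solid[OF N])
  show "x + y \<in> N"
    using fuzzy_ideal_subspace[OF N] x y by (simp add: subspace_add)
  have "fle \<mu> (fjoin x y) (x + y)"
    using fle_add_nonneg_right[OF y(1), of x] fle_add_nonneg_right[OF x(1), of y]
    by (intro fjoin_least) (simp_all add: add.commute)
  then show "fle \<mu> (fabs \<mu> (fjoin x y)) (fabs \<mu> (x + y))"
    using fle_trans[OF x(1) fjoin_upper1, of y] fle_add_nonneg[OF x(1) y(1)]
    by (simp add: fabs_of_nonneg)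
qed

lemma is_fsup_fpos_ideal_part:
  assumes N: "fuzzy_ideal \<mu> N" and B: "B \<subseteq> N" and s: "is_fsup \<mu> B s"
  shows "is_fsup \<mu> {z \<in> N. fle \<mu> 0 z \<and> fle \<mu> z (fpos s)} (fpos s)"
  unfolding is_sup_on_def is_ub_on_def
proof (intro conjI allI impI ballI)
  fix u assume u: "u \<in> UNIV \<and> (\<forall>z\<in>{z \<in> N. fle \<mu> 0 z \<and> fle \<mu> z (fpos s)}. fle \<mu> z u)"
  have "fle \<mu> 0 u"
    using u fuzzy_ideal_subspace[OF N] by (simp add: subspace_0)
  moreover have "fle \<mu> s u"
  proof -
    have "fle \<mu> b u" if "b \<in> B" for b
    proof -
      have "fle \<mu> b s"
        using s that unfolding is_sup_on_def is_ub_on_def by blast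
      then have "fle \<mu> (fpos b) u"
        using u fpos_mem_fuzzy_ideal[OF N] B that fpos_mono by blast
      then show ?thesis
        using fpos_ge fle_trans by blast
    qed
    then show ?thesis
      using s unfolding is_sup_on_def is_ub_on_def by blast
  qed
  ultimately show "fle \<mu> (fpos s) u"
    unfolding fpos_def by (rule fjoin_least[rotated])
qed auto

text \<open>The injection \<open>'a \<Rightarrow> 'i\<close> lets every upward directed subset of \<open>E\<close> serve as the index set
  of its own identity net.\<close>

lemma mem_if_closed_under_increasing_sups:
  fixes g :: "'a \<Rightarrow> 'i"
  assumes g: "inj g"
    and closed: "\<And>(I :: 'i set) r. directed_set I r \<Longrightarrow> closed_under_increasing_sups \<mu> I r N"
    and C: "C \<subseteq> N" "0 \<in> C" "\<And>z. z \<in> C \<Longrightarrow> fle \<mu> 0 z"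
    and join: "\<And>x y. x \<in> C \<Longrightarrow> y \<in> C \<Longrightarrow> fjoin x y \<in> C"
    and s: "is_fsup \<mu> C s"
  shows "s \<in> N"
proof -
  define h where "h = inv_into C g"
  define r where "r i j \<longleftrightarrow> fle \<mu> (h i) (h j)" for i j
  have hC: "i \<in> g ` C \<Longrightarrow> h i \<in> C" for i
    unfolding h_def by (rule inv_into_into)
  have hg: "z \<in> C \<Longrightarrow> h (g z) = z" for z
    unfolding h_def using g by (simp add: inj_on_subset)
  have "directed_set (g ` C) r"
    unfolding directed_set_def r_def
  proof (intro conjI ballI impI)
    show "g ` C \<noteq> {}"
      using C(2) by blast
  next
    fix i j k assume "fle \<mu> (h i) (h j) \<and> fle \<mu> (h j) (h k)"
    then show "fle \<mu> (h i) (h k)"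
      by (blast intro: fle_trans)
  next
    fix i j assume "i \<in> g ` C" "j \<in> g ` C"
    then have "g (fjoin (h i) (h j)) \<in> g ` C" "h (g (fjoin (h i) (h j))) = fjoin (h i) (h j)"
      using join hC hg by auto
    then show "\<exists>k\<in>g ` C. fle \<mu> (h i) (h k) \<and> fle \<mu> (h j) (h k)"
      by (intro bexI[of _ "g (fjoin (h i) (h j))"]) auto
  qed simp
  then have "closed_under_increasing_sups \<mu> (g ` C) r N"
    by (rule closed)
  moreover have "is_fsup \<mu> (h ` g ` C) s"
    using s hg by (simp add: image_image cong: image_cong)
  moreover have "\<forall>i\<in>g ` C. fle \<mu> 0 (h i) \<and> h i \<in> N"
    using C hC by blast
  ultimately show "s \<in> N"
    unfolding closed_under_increasing_sups_def by (auto simp: r_def)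
qed

lemma fuzzy_band_if_closed_under_increasing_sups:
  fixes g :: "'a \<Rightarrow> 'i"
  assumes N: "fuzzy_ideal \<mu> N" and g: "inj g"
    and closed: "\<And>(I :: 'i set) r. directed_set I r \<Longrightarrow> closed_under_increasing_sups \<mu> I r N"
  shows "fuzzy_band \<mu> N"
  unfolding fuzzy_band_def
proof (intro conjI allI impI N)
  fix B s assume "B \<subseteq> N \<and> is_fsup \<mu> B s"
  then have B: "B \<subseteq> N" and s: "is_fsup \<mu> B s"
    by auto
  have sub: "subspace N"
    by (rule fuzzy_ideal_subspace[OF N])
  show "s \<in> N"
  proof (cases "B = {}")
    case True
    then have "fle \<mu> s 0" "fle \<mu> s (s + s)"
      using s unfolding is_sup_on_def is_ub_on_def by auto
    then have "s = 0"
      using fle_add_right_iff[of 0 s s] fle_antisym by auto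
    then show ?thesis
      using sub by (simp add: subspace_0)
  next
    case False
    then obtain b where "b \<in> B" by blast
    then have neg: "fneg s \<in> N"
      using fneg_mem_fuzzy_ideal_if_ge[OF N] B s unfolding is_sup_on_def is_ub_on_def by blast
    have "fpos s \<in> N"
    proof (rule mem_if_closed_under_increasing_sups[OF g closed])
      show "0 \<in> {z \<in> N. fle \<mu> 0 z \<and> fle \<mu> z (fpos s)}"
        using sub by (simp add: subspace_0)
      fix x y assume "x \<in> {z \<in> N. fle \<mu> 0 z \<and> fle \<mu> z (fpos s)}"
        and "y \<in> {z \<in> N. fle \<mu> 0 z \<and> fle \<mu> z (fpos s)}"
      then have "x \<in> N" "fle \<mu> 0 x" "fle \<mu> x (fpos s)" "y \<in> N" "fle \<mu> 0 y" "fle \<mu> y (fpos s)"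
        by auto
      then show "fjoin x y \<in> {z \<in> N. fle \<mu> 0 z \<and> fle \<mu> z (fpos s)}"
        using fjoin_mem_fuzzy_ideal[OF N] fle_trans[OF _ fjoin_upper1] fjoin_least by blast
    qed (use is_fsup_fpos_ideal_part[OF N B s] in auto)
    then show ?thesis
      using subspace_diff[OF sub _ neg] fpos_diff_fneg by metis
  qed
qed

end

locale fuzzy_dedekind_complete_riesz_space = fuzzy_riesz_space +
  assumes dedekind_complete: "fuzzy_dedekind_complete \<mu>"
begin

definition fsup :: "'a set \<Rightarrow> 'a" where
  "fsup A = sup_on UNIV (fle \<mu>) A"

lemma fsup_is_sup:
  assumes "A \<noteq> {}" "\<And>a. a \<in> A \<Longrightarrow> fle \<mu> a b"
  shows "is_fsup \<mu> A (fsup A)"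
proof -
  obtain s where s: "is_fsup \<mu> A s"
    using dedekind_complete assms unfolding fuzzy_dedekind_complete_def is_ub_on_def by blast
  have "fsup A = s"
    unfolding fsup_def by (rule sup_on_eqI[OF s]) (auto intro: fle_antisym)
  with s show ?thesis by simp
qed

lemma fsup_upper: "a \<in> A \<Longrightarrow> (\<And>a. a \<in> A \<Longrightarrow> fle \<mu> a b) \<Longrightarrow> fle \<mu> a (fsup A)"
  using fsup_is_sup[of A b] unfolding is_sup_on_def is_ub_on_def by blast

lemma fsup_least: "A \<noteq> {} \<Longrightarrow> (\<And>a. a \<in> A \<Longrightarrow> fle \<mu> a b) \<Longrightarrow> fle \<mu> (fsup A) b"
  using fsup_is_sup[of A b] unfolding is_sup_on_def is_ub_on_def by blast

lemma fsup_scaleR: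
  assumes c: "0 < c" and ne: "A \<noteq> {}" and bdd: "\<And>a. a \<in> A \<Longrightarrow> fle \<mu> a b"
  shows "fsup ((\<lambda>a. c *\<^sub>R a) ` A) = c *\<^sub>R fsup A"
proof (rule fle_antisym)
  have bdd': "\<And>x. x \<in> (\<lambda>a. c *\<^sub>R a) ` A \<Longrightarrow> fle \<mu> x (c *\<^sub>R b)"
    using bdd fle_scaleR[OF c] by auto
  show "fle \<mu> (fsup ((\<lambda>a. c *\<^sub>R a) ` A)) (c *\<^sub>R fsup A)"
    using ne by (intro fsup_least) (auto intro!: fle_scaleR[OF c] fsup_upper bdd)
  have "fle \<mu> (fsup A) (inverse c *\<^sub>R fsup ((\<lambda>a. c *\<^sub>R a) ` A))"
  proof (intro fsup_least[OF ne])
    fix a assume "a \<in> A"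
    then have "fle \<mu> (c *\<^sub>R a) (fsup ((\<lambda>a. c *\<^sub>R a) ` A))"
      using bdd' by (intro fsup_upper) auto
    then show "fle \<mu> a (inverse c *\<^sub>R fsup ((\<lambda>a. c *\<^sub>R a) ` A))"
      using fle_scaleR[of "inverse c" "c *\<^sub>R a"] c by fastforce
  qed
  then show "fle \<mu> (c *\<^sub>R fsup A) (fsup ((\<lambda>a. c *\<^sub>R a) ` A))"
    using fle_scaleR[OF c, of "fsup A"] c by fastforce
qed

text \<open>Archimedean property: the supremum \<open>s\<close> of the multiples \<open>n l\<close> satisfies \<open>s \<le> s - l\<close>.\<close>

lemma fle_zero_if_multiples_bounded:
  assumes bdd: "\<And>n::nat. n \<ge> 1 \<Longrightarrow> fle \<mu> (real n *\<^sub>R l) a"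
  shows "fle \<mu> l 0"
proof -
  define A where "A = (\<lambda>n::nat. real n *\<^sub>R l) ` {1..}"
  have ne: "A \<noteq> {}"
    unfolding A_def by auto
  have bdd': "\<And>x. x \<in> A \<Longrightarrow> fle \<mu> x a"
    using bdd unfolding A_def by auto
  have "fle \<mu> (real n *\<^sub>R l) (fsup A - l)" if "n \<ge> 1" for n
  proof -
    have "real (Suc n) *\<^sub>R l \<in> A"
      unfolding A_def by (intro imageI) simp
    then have "fle \<mu> (real (Suc n) *\<^sub>R l) (fsup A)"
      using bdd' by (intro fsup_upper)
    then show ?thesis
      using fle_add_right[of _ _ "- l"] by (fastforce simp: algebra_simps)
  qed
  then have "fle \<mu> (fsup A) (fsup A - l)"
    unfolding A_def by (intro fsup_least) auto
  then show ?thesis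
    using fle_diff_swap[of "fsup A" "fsup A" l] by simp
qed

end

section \<open>Fuzzy order bounded operators\<close>

locale fuzzy_riesz_operators =
  E: fuzzy_riesz_space \<mu> + F: fuzzy_dedekind_complete_riesz_space \<nu>
  for \<mu> :: "'a::real_vector \<Rightarrow> 'a \<Rightarrow> real" and \<nu> :: "'b::real_vector \<Rightarrow> 'b \<Rightarrow> real"
begin

lemma fuzzy_positiveD: "fuzzy_positive \<mu> \<nu> P \<Longrightarrow> fle \<mu> 0 x \<Longrightarrow> fle \<nu> 0 (P x)"
  unfolding fuzzy_positive_def by auto

lemma op_leD: "op_le \<mu> \<nu> S R \<Longrightarrow> fle \<mu> 0 x \<Longrightarrow> fle \<nu> (S x) (R x)"
  unfolding op_le_def fuzzy_positive_def using F.fle_iff_diff_nonneg[of "S x" "R x"] by blast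

lemma op_leI: "(\<And>x. fle \<mu> 0 x \<Longrightarrow> fle \<nu> (S x) (R x)) \<Longrightarrow> op_le \<mu> \<nu> S R"
  unfolding op_le_def fuzzy_positive_def by (simp add: F.fle_iff_diff_nonneg[symmetric])

lemma op_le_refl: "op_le \<mu> \<nu> S S"
  by (rule op_leI) simp

lemma op_le_trans: "op_le \<mu> \<nu> S R \<Longrightarrow> op_le \<mu> \<nu> R Q \<Longrightarrow> op_le \<mu> \<nu> S Q"
  by (rule op_leI) (use op_leD F.fle_trans in blast)

lemma FLb_linear: "S \<in> FLb \<mu> \<nu> \<Longrightarrow> linear S"
  unfolding FLb_def by auto

lemma FLb_image_bounded:
  assumes "S \<in> FLb \<mu> \<nu>" "forder_bounded_set \<mu> A"
  obtains l u where "\<And>a. a \<in> A \<Longrightarrow> fle \<nu> l (S a) \<and> fle \<nu> (S a) u"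
proof -
  have "forder_bounded_set \<nu> (S ` A)"
    using assms by (simp add: FLb_def)
  then obtain u l where "fub \<nu> (S ` A) u" "flb \<nu> (S ` A) l"
    unfolding forder_bounded_set_def by blast
  then show ?thesis
    unfolding is_ub_on_def is_lb_on_def by (intro that[of l u]) auto
qed

lemma forder_bounded_setI:
  "(\<And>a. a \<in> A \<Longrightarrow> fle \<nu> l a \<and> fle \<nu> a u) \<Longrightarrow> forder_bounded_set \<nu> A"
  unfolding forder_bounded_set_def is_ub_on_def is_lb_on_def by blast

lemma forder_bounded_interval: "forder_bounded_set \<mu> {y. fle \<mu> 0 y \<and> fle \<mu> y x}"
  unfolding forder_bounded_set_def is_ub_on_def is_lb_on_def by (blast intro: exI[of _ x] exI[of _ 0])

lemma positive_mono:
  assumes "linear P" "fuzzy_positive \<mu> \<nu> P" "fle \<mu> a b"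
  shows "fle \<nu> (P a) (P b)"
proof -
  have "fle \<nu> 0 (P (b - a))"
    using fuzzy_positiveD[OF assms(2)] assms(3) E.fle_iff_diff_nonneg[of a b] by blast
  then show ?thesis
    using linear_diff[OF assms(1), of b a] F.fle_iff_diff_nonneg[of "P a" "P b"] by simp
qed

lemma FLb_if_positive:
  assumes "linear P" "fuzzy_positive \<mu> \<nu> P"
  shows "P \<in> FLb \<mu> \<nu>"
  unfolding FLb_def
proof (intro CollectI conjI allI impI)
  fix A assume "forder_bounded_set \<mu> A"
  then obtain u l where "\<And>a. a \<in> A \<Longrightarrow> fle \<mu> a u \<and> fle \<mu> l a"
    unfolding forder_bounded_set_def is_ub_on_def is_lb_on_def by blast
  then show "forder_bounded_set \<nu> (P ` A)"
    using positive_mono[OF assms] by (intro forder_bounded_setI[of _ "P l" "P u"]) blast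
qed fact

lemma FLb_add:
  assumes S: "S \<in> FLb \<mu> \<nu>" and R: "R \<in> FLb \<mu> \<nu>"
  shows "(\<lambda>x. S x + R x) \<in> FLb \<mu> \<nu>"
  unfolding FLb_def
proof (intro CollectI conjI allI impI)
  show "linear (\<lambda>x. S x + R x)"
    using S R FLb_linear linear_compose_add by blast
  fix A assume A: "forder_bounded_set \<mu> A"
  obtain l1 u1 where 1: "\<And>a. a \<in> A \<Longrightarrow> fle \<nu> l1 (S a) \<and> fle \<nu> (S a) u1"
    using FLb_image_bounded[OF S A] by blast
  obtain l2 u2 where 2: "\<And>a. a \<in> A \<Longrightarrow> fle \<nu> l2 (R a) \<and> fle \<nu> (R a) u2"
    using FLb_image_bounded[OF R A] by blast
  show "forder_bounded_set \<nu> ((\<lambda>x. S x + R x) ` A)"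
    using 1 2 F.fle_add_mono by (intro forder_bounded_setI[of _ "l1 + l2" "u1 + u2"]) blast
qed

lemma FLb_scaleR:
  assumes S: "S \<in> FLb \<mu> \<nu>"
  shows "(\<lambda>x. c *\<^sub>R S x) \<in> FLb \<mu> \<nu>"
  unfolding FLb_def
proof (intro CollectI conjI allI impI)
  show "linear (\<lambda>x. c *\<^sub>R S x)"
    using FLb_linear[OF S] by (rule linear_compose_scale_right)
  fix A assume A: "forder_bounded_set \<mu> A"
  obtain l u where lu: "\<And>a. a \<in> A \<Longrightarrow> fle \<nu> l (S a) \<and> fle \<nu> (S a) u"
    using FLb_image_bounded[OF S A] by blast
  show "forder_bounded_set \<nu> ((\<lambda>x. c *\<^sub>R S x) ` A)"
  proof (cases "0 \<le> c")
    case True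
    then show ?thesis
      using lu F.fle_scaleR_nonneg by (intro forder_bounded_setI[of _ "c *\<^sub>R l" "c *\<^sub>R u"]) blast
  next
    case False
    then show ?thesis
      using lu F.fle_scaleR_nonpos[of c] by (intro forder_bounded_setI[of _ "c *\<^sub>R u" "c *\<^sub>R l"]) auto
  qed
qed

lemma linear_fpos_fneg: "linear S \<Longrightarrow> S x = S (E.fpos x) - S (E.fneg x)"
  using E.fpos_diff_fneg[of x] linear_diff by metis

lemma op_le_antisym:
  assumes "linear S" "linear R" "op_le \<mu> \<nu> S R" "op_le \<mu> \<nu> R S"
  shows "S = R"
proof
  fix x
  have "S y = R y" if "fle \<mu> 0 y" for y
    using op_leD[OF assms(3) that] op_leD[OF assms(4) that] F.fle_antisym by blast
  then show "S x = R x"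
    using linear_fpos_fneg[OF assms(1), of x] linear_fpos_fneg[OF assms(2), of x] by simp
qed

lemma nonneg_if_op_le_plus_minus:
  assumes "op_le \<mu> \<nu> T R" "op_le \<mu> \<nu> (\<lambda>x. - T x) R" "fle \<mu> 0 x"
  shows "fle \<nu> 0 (R x)"
proof -
  have "fle \<nu> (T x + - T x) (R x + R x)"
    using op_leD[OF assms(1,3)] op_leD[OF assms(2,3)] F.fle_add_mono by blast
  then show ?thesis
    using F.fle_scaleR_iff[of 2 0 "R x"] by (simp add: scaleR_2)
qed

definition pos_extension :: "('a \<Rightarrow> 'b) \<Rightarrow> 'a \<Rightarrow> 'b" where
  "pos_extension \<phi> x = \<phi> (E.fpos x) - \<phi> (E.fneg x)"

context
  fixes \<phi> :: "'a \<Rightarrow> 'b"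
  assumes add: "\<And>x y. fle \<mu> 0 x \<Longrightarrow> fle \<mu> 0 y \<Longrightarrow> \<phi> (x + y) = \<phi> x + \<phi> y"
    and scaleR: "\<And>c x. 0 < c \<Longrightarrow> fle \<mu> 0 x \<Longrightarrow> \<phi> (c *\<^sub>R x) = c *\<^sub>R \<phi> x"
begin

lemma pos_extension_diff:
  assumes "fle \<mu> 0 a" "fle \<mu> 0 b" "x = a - b"
  shows "pos_extension \<phi> x = \<phi> a - \<phi> b"
proof -
  have "E.fpos x + b = a + E.fneg x"
    using assms E.fpos_diff_fneg[of x] by (simp add: algebra_simps)
  then have "\<phi> (E.fpos x) + \<phi> b = \<phi> a + \<phi> (E.fneg x)"
    using add assms by (metis E.fneg_nonneg E.fpos_nonneg)
  then show ?thesis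
    unfolding pos_extension_def by (simp add: algebra_simps)
qed

lemma pos_extension_eq: "fle \<mu> 0 x \<Longrightarrow> pos_extension \<phi> x = \<phi> x"
  using pos_extension_diff[of x 0 x] add[of 0 0] by simp

lemma linear_pos_extension: "linear (pos_extension \<phi>)"
proof (rule linearI)
  fix x y
  have "x + y = E.fpos x + E.fpos y - (E.fneg x + E.fneg y)"
    using E.fpos_diff_fneg[of x] E.fpos_diff_fneg[of y] by (simp add: algebra_simps)
  then have "pos_extension \<phi> (x + y) = \<phi> (E.fpos x + E.fpos y) - \<phi> (E.fneg x + E.fneg y)"
    by (intro pos_extension_diff) (auto intro: E.fle_add_nonneg)
  then show "pos_extension \<phi> (x + y) = pos_extension \<phi> x + pos_extension \<phi> y"
    unfolding pos_extension_def by (simp add: add)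
next
  fix c :: real and x
  consider "0 < c" | "c = 0" | "0 < - c" by linarith
  then show "pos_extension \<phi> (c *\<^sub>R x) = c *\<^sub>R pos_extension \<phi> x"
  proof cases
    case 1
    have "c *\<^sub>R x = c *\<^sub>R E.fpos x - c *\<^sub>R E.fneg x"
      using E.fpos_diff_fneg[of x] scaleR_diff_right[of c "E.fpos x" "E.fneg x"] by simp
    then have "pos_extension \<phi> (c *\<^sub>R x) = \<phi> (c *\<^sub>R E.fpos x) - \<phi> (c *\<^sub>R E.fneg x)"
      using E.fle_scaleR[OF 1, of 0] by (intro pos_extension_diff) auto
    also have "\<dots> = c *\<^sub>R pos_extension \<phi> x"
      unfolding pos_extension_def scaleR[OF 1 E.fpos_nonneg] scaleR[OF 1 E.fneg_nonneg]
      by (simp add: scaleR_diff_right)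
    finally show ?thesis .
  next
    case 2
    then show ?thesis
      using pos_extension_eq[of 0] add[of 0 0] by simp
  next
    case 3
    have "c *\<^sub>R x = (- c) *\<^sub>R E.fneg x - (- c) *\<^sub>R E.fpos x"
      using E.fpos_diff_fneg[of x] scaleR_diff_right[of c "E.fpos x" "E.fneg x"] by simp
    then have "pos_extension \<phi> (c *\<^sub>R x) = \<phi> ((- c) *\<^sub>R E.fneg x) - \<phi> ((- c) *\<^sub>R E.fpos x)"
      using E.fle_scaleR[OF 3, of 0] by (intro pos_extension_diff) auto
    also have "\<dots> = c *\<^sub>R pos_extension \<phi> x"
      unfolding pos_extension_def scaleR[OF 3 E.fpos_nonneg] scaleR[OF 3 E.fneg_nonneg]
      by (simp add: algebra_simps)
    finally show ?thesis .
  qed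
qed

end

subsection \<open>The modulus of an operator: the Riesz--Kantorovich formula\<close>

definition rk_set :: "('a \<Rightarrow> 'b) \<Rightarrow> 'a \<Rightarrow> 'b set" where
  "rk_set T x = (\<lambda>y. T y - T (x - y)) ` {y. fle \<mu> 0 y \<and> fle \<mu> y x}"

definition rk_sup :: "('a \<Rightarrow> 'b) \<Rightarrow> 'a \<Rightarrow> 'b" where
  "rk_sup T x = F.fsup (rk_set T x)"

lemma rk_set_bounded:
  assumes "T \<in> FLb \<mu> \<nu>"
  obtains b where "\<And>q. q \<in> rk_set T x \<Longrightarrow> fle \<nu> q b"
proof -
  obtain l u where lu: "\<And>a. a \<in> {y. fle \<mu> 0 y \<and> fle \<mu> y x} \<Longrightarrow> fle \<nu> l (T a) \<and> fle \<nu> (T a) u"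
    using FLb_image_bounded[OF assms forder_bounded_interval] by blast
  have "fle \<nu> (T y - T (x - y)) (u - l)" if "fle \<mu> 0 y" "fle \<mu> y x" for y
  proof -
    have "fle \<mu> 0 (x - y)" "fle \<mu> (x - y) x"
      using that E.fle_iff_diff_nonneg[of y x] E.fle_diff_nonneg by auto
    then have "fle \<nu> (- T (x - y)) (- l)"
      using lu F.fle_minus by blast
    moreover have "fle \<nu> (T y) u"
      using lu that by blast
    ultimately show ?thesis
      using F.fle_add_mono by fastforce
  qed
  then show ?thesis
    by (intro that[of "u - l"]) (auto simp: rk_set_def)
qed

lemma rk_set_nonempty: "fle \<mu> 0 x \<Longrightarrow> rk_set T x \<noteq> {}"
  unfolding rk_set_def by blast

lemma rk_sup_upper:
  assumes "T \<in> FLb \<mu> \<nu>" "fle \<mu> 0 y" "fle \<mu> y x"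
  shows "fle \<nu> (T y - T (x - y)) (rk_sup T x)"
proof -
  obtain b where "\<And>q. q \<in> rk_set T x \<Longrightarrow> fle \<nu> q b"
    using rk_set_bounded[OF assms(1)] by blast
  moreover have "T y - T (x - y) \<in> rk_set T x"
    unfolding rk_set_def using assms by blast
  ultimately show ?thesis
    unfolding rk_sup_def by (intro F.fsup_upper)
qed

lemma rk_sup_least:
  assumes "fle \<mu> 0 x" "\<And>y. fle \<mu> 0 y \<Longrightarrow> fle \<mu> y x \<Longrightarrow> fle \<nu> (T y - T (x - y)) b"
  shows "fle \<nu> (rk_sup T x) b"
  unfolding rk_sup_def using assms by (intro F.fsup_least rk_set_nonempty) (auto simp: rk_set_def)

lemma rk_sup_add_le:
  assumes T: "T \<in> FLb \<mu> \<nu>" and x: "fle \<mu> 0 x" and z: "fle \<mu> 0 z"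
  shows "fle \<nu> (rk_sup T (x + z)) (rk_sup T x + rk_sup T z)"
proof (rule rk_sup_least)
  show "fle \<mu> 0 (x + z)"
    using x z E.fle_add_nonneg by blast
  fix y assume y: "fle \<mu> 0 y" "fle \<mu> y (x + z)"
  let ?y1 = "E.fmeet y x" and ?y2 = "y - E.fmeet y x"
  have y1: "fle \<mu> 0 ?y1" "fle \<mu> ?y1 x"
    using y x by (auto intro: E.fmeet_nonneg)
  have y2_eq: "?y2 = E.fjoin y x - x"
    using E.fmeet_eq[of y x] by (simp add: algebra_simps)
  have "fle \<mu> (E.fjoin y x) (x + z)"
    using y E.fle_add_nonneg_right[OF z, of x] by (intro E.fjoin_least) auto
  then have y2: "fle \<mu> 0 ?y2" "fle \<mu> ?y2 z"
    unfolding y2_eq using E.fle_iff_diff_nonneg[of x "E.fjoin y x"] E.fle_add_imp_diff_fle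
    by simp_all
  have "T y - T (x + z - y) = (T ?y1 - T (x - ?y1)) + (T ?y2 - T (z - ?y2))"
    using linear_diff[OF FLb_linear[OF T]] linear_add[OF FLb_linear[OF T]] by (simp add: algebra_simps)
  then show "fle \<nu> (T y - T (x + z - y)) (rk_sup T x + rk_sup T z)"
    using rk_sup_upper[OF T y1] rk_sup_upper[OF T y2] F.fle_add_mono by simp
qed

lemma rk_sup_add:
  assumes T: "T \<in> FLb \<mu> \<nu>" and x: "fle \<mu> 0 x" and z: "fle \<mu> 0 z"
  shows "rk_sup T (x + z) = rk_sup T x + rk_sup T z"
proof (rule F.fle_antisym[OF rk_sup_add_le[OF T x z]])
  have lin: "linear T"
    using T FLb_linear by blast
  have "fle \<nu> (rk_sup T x) (rk_sup T (x + z) - rk_sup T z)"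
  proof (rule rk_sup_least[OF x])
    fix y1 assume y1: "fle \<mu> 0 y1" "fle \<mu> y1 x"
    have "fle \<nu> (rk_sup T z) (rk_sup T (x + z) - (T y1 - T (x - y1)))"
    proof (rule rk_sup_least[OF z])
      fix y2 assume y2: "fle \<mu> 0 y2" "fle \<mu> y2 z"
      have "fle \<mu> 0 (y1 + y2)" "fle \<mu> (y1 + y2) (x + z)"
        using y1 y2 E.fle_add_nonneg E.fle_add_mono by auto
      then have "fle \<nu> (T (y1 + y2) - T (x + z - (y1 + y2))) (rk_sup T (x + z))"
        by (rule rk_sup_upper[OF T])
      moreover have "x + z - (y1 + y2) = (x - y1) + (z - y2)"
        by (simp add: algebra_simps)
      then have "T (y1 + y2) - T (x + z - (y1 + y2)) = (T y1 - T (x - y1)) + (T y2 - T (z - y2))"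
        by (simp only: linear_add[OF lin]) (simp add: algebra_simps)
      ultimately show "fle \<nu> (T y2 - T (z - y2)) (rk_sup T (x + z) - (T y1 - T (x - y1)))"
        using F.fle_add_imp_fle_diff by simp
    qed
    then show "fle \<nu> (T y1 - T (x - y1)) (rk_sup T (x + z) - rk_sup T z)"
      by (rule F.fle_diff_swap)
  qed
  from F.fle_diff_imp_fle_add[OF this]
  show "fle \<nu> (rk_sup T x + rk_sup T z) (rk_sup T (x + z))"
    by (simp add: add.commute)
qed

lemma rk_sup_scaleR:
  assumes T: "T \<in> FLb \<mu> \<nu>" and c: "0 < c" and x: "fle \<mu> 0 x"
  shows "rk_sup T (c *\<^sub>R x) = c *\<^sub>R rk_sup T x"
proof -
  have lin: "linear T"
    using T FLb_linear by blast
  have "{y. fle \<mu> 0 y \<and> fle \<mu> y (c *\<^sub>R x)} = (\<lambda>y. c *\<^sub>R y) ` {y. fle \<mu> 0 y \<and> fle \<mu> y x}"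
  proof (intro set_eqI iffI)
    fix y assume "y \<in> {y. fle \<mu> 0 y \<and> fle \<mu> y (c *\<^sub>R x)}"
    then have "fle \<mu> 0 (inverse c *\<^sub>R y)" "fle \<mu> (inverse c *\<^sub>R y) x"
      using E.fle_scaleR[of "inverse c" 0 y] E.fle_scaleR[of "inverse c" y "c *\<^sub>R x"] c by auto
    moreover have "y = c *\<^sub>R (inverse c *\<^sub>R y)"
      using c by simp
    ultimately show "y \<in> (\<lambda>y. c *\<^sub>R y) ` {y. fle \<mu> 0 y \<and> fle \<mu> y x}"
      by blast
  qed (use E.fle_scaleR[OF c] in fastforce)
  moreover have "T (c *\<^sub>R y) - T (c *\<^sub>R x - c *\<^sub>R y) = c *\<^sub>R (T y - T (x - y))" for y
    using linear_diff[OF lin] linear_scale[OF lin] by (simp add: scaleR_diff_right[symmetric])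
  ultimately have "rk_set T (c *\<^sub>R x) = (\<lambda>q. c *\<^sub>R q) ` rk_set T x"
    unfolding rk_set_def by (auto simp: image_image)
  moreover obtain b where b: "\<And>q. q \<in> rk_set T x \<Longrightarrow> fle \<nu> q b"
    using rk_set_bounded[OF T] by blast
  ultimately show ?thesis
    unfolding rk_sup_def using F.fsup_scaleR[OF c rk_set_nonempty[OF x, of T] b] by simp
qed

definition rk_abs :: "('a \<Rightarrow> 'b) \<Rightarrow> 'a \<Rightarrow> 'b" where
  "rk_abs T = pos_extension (rk_sup T)"

lemma linear_rk_abs: "T \<in> FLb \<mu> \<nu> \<Longrightarrow> linear (rk_abs T)"
  unfolding rk_abs_def by (rule linear_pos_extension) (simp_all add: rk_sup_add rk_sup_scaleR)

lemma rk_abs_eq_rk_sup: "T \<in> FLb \<mu> \<nu> \<Longrightarrow> fle \<mu> 0 x \<Longrightarrow> rk_abs T x = rk_sup T x"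
  unfolding rk_abs_def by (rule pos_extension_eq) (simp_all add: rk_sup_add rk_sup_scaleR)

lemma
  assumes T: "T \<in> FLb \<mu> \<nu>"
  shows rk_abs_ge: "op_le \<mu> \<nu> T (rk_abs T)"
    and rk_abs_ge_minus: "op_le \<mu> \<nu> (\<lambda>x. - T x) (rk_abs T)"
proof -
  have "T 0 = 0"
    by (rule linear_0[OF FLb_linear[OF T]])
  then show "op_le \<mu> \<nu> T (rk_abs T)" "op_le \<mu> \<nu> (\<lambda>x. - T x) (rk_abs T)"
    using rk_sup_upper[OF T _ E.fle_refl] rk_sup_upper[OF T E.fle_refl]
    by (auto intro!: op_leI simp: rk_abs_eq_rk_sup[OF T])
qed

lemma rk_abs_is_sup:
  assumes T: "T \<in> FLb \<mu> \<nu>"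
  shows "is_sup_on (FLb \<mu> \<nu>) (op_le \<mu> \<nu>) {T, \<lambda>x. - T x} (rk_abs T)"
proof -
  have "fuzzy_positive \<mu> \<nu> (rk_abs T)"
    unfolding fuzzy_positive_def
    using nonneg_if_op_le_plus_minus[OF rk_abs_ge[OF T] rk_abs_ge_minus[OF T]] by blast
  then have "rk_abs T \<in> FLb \<mu> \<nu>"
    by (rule FLb_if_positive[OF linear_rk_abs[OF T]])
  moreover have "op_le \<mu> \<nu> (rk_abs T) R"
    if R: "R \<in> FLb \<mu> \<nu>" "op_le \<mu> \<nu> T R" "op_le \<mu> \<nu> (\<lambda>x. - T x) R" for R
  proof (rule op_leI)
    fix x assume x: "fle \<mu> 0 x"
    have "fle \<nu> (rk_sup T x) (R x)"
    proof (rule rk_sup_least[OF x])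
      fix y assume y: "fle \<mu> 0 y" "fle \<mu> y x"
      then have "fle \<nu> (T y + - T (x - y)) (R y + R (x - y))"
        using op_leD[OF R(2)] op_leD[OF R(3)] E.fle_iff_diff_nonneg[of y x] F.fle_add_mono by blast
      then show "fle \<nu> (T y - T (x - y)) (R x)"
        using linear_add[OF FLb_linear[OF R(1)], of y "x - y"] by simp
    qed
    then show "fle \<nu> (rk_abs T x) (R x)"
      using rk_abs_eq_rk_sup[OF T x] by simp
  qed
  ultimately show ?thesis
    unfolding is_sup_on_def is_ub_on_def using rk_abs_ge[OF T] rk_abs_ge_minus[OF T] by auto
qed

lemma op_abs_eq_rk_abs: "T \<in> FLb \<mu> \<nu> \<Longrightarrow> op_abs \<mu> \<nu> T = rk_abs T"
  unfolding op_abs_def by (rule sup_on_eqI[OF rk_abs_is_sup]) (auto intro: op_le_antisym FLb_linear)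

lemma op_abs_is_sup: "T \<in> FLb \<mu> \<nu> \<Longrightarrow> is_sup_on (FLb \<mu> \<nu>) (op_le \<mu> \<nu>) {T, \<lambda>x. - T x} (op_abs \<mu> \<nu> T)"
  using op_abs_eq_rk_abs rk_abs_is_sup by simp

lemma op_abs_FLb: "T \<in> FLb \<mu> \<nu> \<Longrightarrow> op_abs \<mu> \<nu> T \<in> FLb \<mu> \<nu>"
  and op_abs_ge: "T \<in> FLb \<mu> \<nu> \<Longrightarrow> op_le \<mu> \<nu> T (op_abs \<mu> \<nu> T)"
  and op_abs_ge_minus: "T \<in> FLb \<mu> \<nu> \<Longrightarrow> op_le \<mu> \<nu> (\<lambda>x. - T x) (op_abs \<mu> \<nu> T)"
  using op_abs_is_sup unfolding is_sup_on_def is_ub_on_def by blast+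

lemma op_abs_least:
  "T \<in> FLb \<mu> \<nu> \<Longrightarrow> R \<in> FLb \<mu> \<nu> \<Longrightarrow> op_le \<mu> \<nu> T R \<Longrightarrow> op_le \<mu> \<nu> (\<lambda>x. - T x) R \<Longrightarrow>
    op_le \<mu> \<nu> (op_abs \<mu> \<nu> T) R"
  using op_abs_is_sup[of T] unfolding is_sup_on_def is_ub_on_def by blast

lemma linear_op_abs: "T \<in> FLb \<mu> \<nu> \<Longrightarrow> linear (op_abs \<mu> \<nu> T)"
  using op_abs_FLb FLb_linear by blast

lemma op_abs_eq_rk_sup: "T \<in> FLb \<mu> \<nu> \<Longrightarrow> fle \<mu> 0 x \<Longrightarrow> op_abs \<mu> \<nu> T x = rk_sup T x"
  using op_abs_eq_rk_abs rk_abs_eq_rk_sup by simp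

lemma op_abs_nonneg: "T \<in> FLb \<mu> \<nu> \<Longrightarrow> fle \<mu> 0 x \<Longrightarrow> fle \<nu> 0 (op_abs \<mu> \<nu> T x)"
  using nonneg_if_op_le_plus_minus[OF op_abs_ge op_abs_ge_minus] by blast

lemma fuzzy_positive_op_abs: "T \<in> FLb \<mu> \<nu> \<Longrightarrow> fuzzy_positive \<mu> \<nu> (op_abs \<mu> \<nu> T)"
  unfolding fuzzy_positive_def using op_abs_nonneg by blast

lemma op_abs_mono: "T \<in> FLb \<mu> \<nu> \<Longrightarrow> fle \<mu> a b \<Longrightarrow> fle \<nu> (op_abs \<mu> \<nu> T a) (op_abs \<mu> \<nu> T b)"
  using positive_mono[OF linear_op_abs fuzzy_positive_op_abs] by blast

lemma op_abs_of_positive: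
  assumes P: "linear P" "fuzzy_positive \<mu> \<nu> P"
  shows "op_abs \<mu> \<nu> P = P"
  unfolding op_abs_def
proof (rule sup_on_eqI)
  have "op_le \<mu> \<nu> (\<lambda>x. - P x) P"
  proof (rule op_leI)
    fix x assume "fle \<mu> 0 x"
    then have "fle \<nu> 0 (P x)"
      by (rule fuzzy_positiveD[OF P(2)])
    then show "fle \<nu> (- P x) (P x)"
      using F.fle_minus F.fle_trans by fastforce
  qed
  then show "is_sup_on (FLb \<mu> \<nu>) (op_le \<mu> \<nu>) {P, \<lambda>x. - P x} P"
    unfolding is_sup_on_def is_ub_on_def using FLb_if_positive[OF P] op_le_refl by auto
qed (auto intro: op_le_antisym FLb_linear)

lemma op_abs_diff_le:
  assumes T: "T \<in> FLb \<mu> \<nu>" and a: "fle \<mu> 0 a" and b: "fle \<mu> 0 b"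
  shows "fle \<nu> (T a - T b) (op_abs \<mu> \<nu> T (a + b))"
proof -
  have "fle \<nu> (T a + - T b) (op_abs \<mu> \<nu> T a + op_abs \<mu> \<nu> T b)"
    using op_leD[OF op_abs_ge[OF T] a] op_leD[OF op_abs_ge_minus[OF T] b] F.fle_add_mono by blast
  then show ?thesis
    using linear_add[OF linear_op_abs[OF T], of a b] by simp
qed

lemma fabs_apply_le_op_abs:
  assumes T: "T \<in> FLb \<mu> \<nu>"
  shows "fle \<nu> (fabs \<nu> (T x)) (op_abs \<mu> \<nu> T (fabs \<mu> x))"
proof (rule F.fabs_least)
  have Tx: "T x = T (E.fpos x) - T (E.fneg x)"
    by (rule linear_fpos_fneg[OF FLb_linear[OF T]])
  then show "fle \<nu> (T x) (op_abs \<mu> \<nu> T (fabs \<mu> x))"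
    using op_abs_diff_le[OF T E.fpos_nonneg E.fneg_nonneg, of x x] E.fabs_eq_fpos_add_fneg[of x]
    by simp
  from Tx show "fle \<nu> (- T x) (op_abs \<mu> \<nu> T (fabs \<mu> x))"
    using op_abs_diff_le[OF T E.fneg_nonneg E.fpos_nonneg, of x x] E.fabs_eq_fpos_add_fneg[of x]
    by (simp add: add.commute)
qed

lemma op_abs_add_le:
  assumes S: "S \<in> FLb \<mu> \<nu>" and R: "R \<in> FLb \<mu> \<nu>"
  shows "op_le \<mu> \<nu> (op_abs \<mu> \<nu> (\<lambda>x. S x + R x)) (\<lambda>x. op_abs \<mu> \<nu> S x + op_abs \<mu> \<nu> R x)"
proof (rule op_abs_least[OF FLb_add[OF S R] FLb_add[OF op_abs_FLb[OF S] op_abs_FLb[OF R]]])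
  show "op_le \<mu> \<nu> (\<lambda>x. S x + R x) (\<lambda>x. op_abs \<mu> \<nu> S x + op_abs \<mu> \<nu> R x)"
    using op_leD[OF op_abs_ge[OF S]] op_leD[OF op_abs_ge[OF R]] F.fle_add_mono
    by (intro op_leI) blast
  show "op_le \<mu> \<nu> (\<lambda>x. - (S x + R x)) (\<lambda>x. op_abs \<mu> \<nu> S x + op_abs \<mu> \<nu> R x)"
    using op_leD[OF op_abs_ge_minus[OF S]] op_leD[OF op_abs_ge_minus[OF R]] F.fle_add_mono
    by (intro op_leI) (metis minus_add_distrib)
qed

lemma op_abs_scaleR_le:
  assumes S: "S \<in> FLb \<mu> \<nu>"
  shows "op_le \<mu> \<nu> (op_abs \<mu> \<nu> (\<lambda>x. c *\<^sub>R S x)) (\<lambda>x. \<bar>c\<bar> *\<^sub>R op_abs \<mu> \<nu> S x)"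
proof -
  have bounds: "fle \<nu> (c *\<^sub>R S x) (\<bar>c\<bar> *\<^sub>R op_abs \<mu> \<nu> S x)"
    "fle \<nu> (- (c *\<^sub>R S x)) (\<bar>c\<bar> *\<^sub>R op_abs \<mu> \<nu> S x)" if x: "fle \<mu> 0 x" for x
    using F.fle_scaleR_nonneg[of "\<bar>c\<bar>", OF _ op_leD[OF op_abs_ge[OF S] x]]
      F.fle_scaleR_nonneg[of "\<bar>c\<bar>", OF _ op_leD[OF op_abs_ge_minus[OF S] x]]
    by (cases "0 \<le> c"; simp)+
  show ?thesis
    using bounds by (intro op_abs_least FLb_scaleR S op_abs_FLb op_leI) auto
qed

definition dominated_ops :: "('a \<Rightarrow> 'b) \<Rightarrow> ('a \<Rightarrow> 'b) set" where
  "dominated_ops T =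
     {S \<in> FLb \<mu> \<nu>. \<exists>c>0. op_le \<mu> \<nu> (op_abs \<mu> \<nu> S) (\<lambda>x. c *\<^sub>R op_abs \<mu> \<nu> T x)}"

lemma dominated_ops_add:
  assumes S: "S \<in> dominated_ops T" and R: "R \<in> dominated_ops T"
  shows "(\<lambda>x. S x + R x) \<in> dominated_ops T"
proof -
  obtain c where c: "c > 0" "op_le \<mu> \<nu> (op_abs \<mu> \<nu> S) (\<lambda>x. c *\<^sub>R op_abs \<mu> \<nu> T x)"
    and SF: "S \<in> FLb \<mu> \<nu>"
    using S unfolding dominated_ops_def by blast
  obtain d where d: "d > 0" "op_le \<mu> \<nu> (op_abs \<mu> \<nu> R) (\<lambda>x. d *\<^sub>R op_abs \<mu> \<nu> T x)"
    and RF: "R \<in> FLb \<mu> \<nu>"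
    using R unfolding dominated_ops_def by blast
  have "op_le \<mu> \<nu> (\<lambda>x. op_abs \<mu> \<nu> S x + op_abs \<mu> \<nu> R x) (\<lambda>x. (c + d) *\<^sub>R op_abs \<mu> \<nu> T x)"
    using op_leD[OF c(2)] op_leD[OF d(2)] F.fle_add_mono
    by (intro op_leI) (fastforce simp: scaleR_add_left)
  then have "op_le \<mu> \<nu> (op_abs \<mu> \<nu> (\<lambda>x. S x + R x)) (\<lambda>x. (c + d) *\<^sub>R op_abs \<mu> \<nu> T x)"
    using op_abs_add_le[OF SF RF] op_le_trans by blast
  then show ?thesis
    unfolding dominated_ops_def using FLb_add[OF SF RF] c d by (auto intro!: exI[of _ "c + d"])
qed

lemma dominated_ops_scaleR:
  assumes T: "T \<in> FLb \<mu> \<nu>" and S: "S \<in> dominated_ops T"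
  shows "(\<lambda>x. a *\<^sub>R S x) \<in> dominated_ops T"
proof -
  obtain c where c: "c > 0" "op_le \<mu> \<nu> (op_abs \<mu> \<nu> S) (\<lambda>x. c *\<^sub>R op_abs \<mu> \<nu> T x)"
    and SF: "S \<in> FLb \<mu> \<nu>"
    using S unfolding dominated_ops_def by blast
  have "op_le \<mu> \<nu> (\<lambda>x. \<bar>a\<bar> *\<^sub>R op_abs \<mu> \<nu> S x) (\<lambda>x. ((\<bar>a\<bar> + 1) * c) *\<^sub>R op_abs \<mu> \<nu> T x)"
  proof (rule op_leI)
    fix x assume x: "fle \<mu> 0 x"
    have "fle \<nu> (\<bar>a\<bar> *\<^sub>R op_abs \<mu> \<nu> S x) ((\<bar>a\<bar> * c) *\<^sub>R op_abs \<mu> \<nu> T x)"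
      using F.fle_scaleR_nonneg[of "\<bar>a\<bar>", OF _ op_leD[OF c(2) x]] by simp
    also have "fle \<nu> \<dots> (((\<bar>a\<bar> + 1) * c) *\<^sub>R op_abs \<mu> \<nu> T x)"
      using c(1) by (intro F.fle_scaleR_left_mono op_abs_nonneg[OF T x]) (simp add: algebra_simps)
    finally show "fle \<nu> (\<bar>a\<bar> *\<^sub>R op_abs \<mu> \<nu> S x) (((\<bar>a\<bar> + 1) * c) *\<^sub>R op_abs \<mu> \<nu> T x)" .
  qed
  then have "op_le \<mu> \<nu> (op_abs \<mu> \<nu> (\<lambda>x. a *\<^sub>R S x)) (\<lambda>x. ((\<bar>a\<bar> + 1) * c) *\<^sub>R op_abs \<mu> \<nu> T x)"
    using op_abs_scaleR_le[OF SF, of a] op_le_trans by blast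
  moreover have "(\<bar>a\<bar> + 1) * c > 0"
    using c by (simp add: add_pos_nonneg)
  ultimately show ?thesis
    unfolding dominated_ops_def using FLb_scaleR[OF SF] by blast
qed

lemma op_ideal_dominated_ops:
  assumes T: "T \<in> FLb \<mu> \<nu>"
  shows "op_ideal \<mu> \<nu> (dominated_ops T)"
  unfolding op_ideal_def op_subspace_def
proof (intro conjI ballI allI impI)
  show "dominated_ops T \<subseteq> FLb \<mu> \<nu>"
    unfolding dominated_ops_def by blast
  have "op_abs \<mu> \<nu> (\<lambda>x. 0) = (\<lambda>x. 0)"
    by (rule op_abs_of_positive) (simp_all add: linear_zero fuzzy_positive_def)
  then show "(\<lambda>x. 0) \<in> dominated_ops T"
    unfolding dominated_ops_def
    using FLb_scaleR[OF T, of 0] op_abs_nonneg[OF T] by (auto intro!: exI[of _ 1] op_leI)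
next
  fix S R assume "S \<in> FLb \<mu> \<nu> \<and> R \<in> dominated_ops T \<and> op_le \<mu> \<nu> (op_abs \<mu> \<nu> S) (op_abs \<mu> \<nu> R)"
  then show "S \<in> dominated_ops T"
    unfolding dominated_ops_def using op_le_trans by blast
qed (simp_all add: dominated_ops_add dominated_ops_scaleR[OF T])

lemma mem_dominated_ops_self: "T \<in> FLb \<mu> \<nu> \<Longrightarrow> T \<in> dominated_ops T"
  unfolding dominated_ops_def by (auto intro!: exI[of _ 1] op_le_refl)

lemma gen_ideal_dominated:
  assumes T: "T \<in> FLb \<mu> \<nu>" and S: "S \<in> gen_ideal \<mu> \<nu> T"
  obtains c where "S \<in> FLb \<mu> \<nu>" "c > 0" "op_le \<mu> \<nu> (op_abs \<mu> \<nu> S) (\<lambda>x. c *\<^sub>R op_abs \<mu> \<nu> T x)"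
proof -
  have "S \<in> dominated_ops T"
    using S op_ideal_dominated_ops[OF T] mem_dominated_ops_self[OF T] unfolding gen_ideal_def by blast
  then show ?thesis
    using that unfolding dominated_ops_def by blast
qed

lemma gen_ideal_FLb: "T \<in> FLb \<mu> \<nu> \<Longrightarrow> S \<in> gen_ideal \<mu> \<nu> T \<Longrightarrow> S \<in> FLb \<mu> \<nu>"
  using gen_ideal_dominated by blast

lemma mem_gen_ideal:
  "S \<in> FLb \<mu> \<nu> \<Longrightarrow> op_le \<mu> \<nu> (op_abs \<mu> \<nu> S) (op_abs \<mu> \<nu> T) \<Longrightarrow> S \<in> gen_ideal \<mu> \<nu> T"
  unfolding gen_ideal_def op_ideal_def by blast

lemma mem_null_ideal_iff: "fle \<mu> 0 z \<Longrightarrow> z \<in> null_ideal \<mu> \<nu> S \<longleftrightarrow> op_abs \<mu> \<nu> S z = 0"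
  unfolding null_ideal_def by (simp add: E.fabs_of_nonneg)

lemma fuzzy_ideal_null_ideal:
  assumes S: "S \<in> FLb \<mu> \<nu>"
  shows "fuzzy_ideal \<mu> (null_ideal \<mu> \<nu> S)"
proof -
  let ?P = "op_abs \<mu> \<nu> S"
  have lin: "linear ?P"
    by (rule linear_op_abs[OF S])
  have zero: "?P (fabs \<mu> x) = 0" if "fle \<mu> (fabs \<mu> x) a" "?P a = 0" for x a
    using op_abs_mono[OF S that(1)] op_abs_nonneg[OF S E.fabs_nonneg, of x] that(2) F.fle_antisym
    by simp
  show ?thesis
    unfolding fuzzy_ideal_def null_ideal_def
  proof (intro conjI allI impI subspaceI)
    show "0 \<in> {x. ?P (fabs \<mu> x) = 0}"
      using E.fabs_of_nonneg[of 0] linear_0[OF lin] by simp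
  next
    fix x y assume "x \<in> {x. ?P (fabs \<mu> x) = 0}" "y \<in> {x. ?P (fabs \<mu> x) = 0}"
    then have "?P (fabs \<mu> x + fabs \<mu> y) = 0"
      using linear_add[OF lin] by simp
    then show "x + y \<in> {x. ?P (fabs \<mu> x) = 0}"
      using zero[OF E.fabs_triangle] by simp
  next
    fix c :: real and x assume "x \<in> {x. ?P (fabs \<mu> x) = 0}"
    then show "c *\<^sub>R x \<in> {x. ?P (fabs \<mu> x) = 0}"
      using E.fabs_scaleR[of c x] linear_scale[OF lin] by simp
  next
    fix x y assume "fle \<mu> (fabs \<mu> x) (fabs \<mu> y) \<and> y \<in> {x. ?P (fabs \<mu> x) = 0}"
    then show "x \<in> {x. ?P (fabs \<mu> x) = 0}"
      using zero by blast
  qed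
qed

lemma apply_diff_le_op_abs_diff:
  assumes T: "T \<in> FLb \<mu> \<nu>" and u: "fle \<mu> 0 u" and v: "fle \<mu> 0 v"
    and w: "fle \<mu> 0 w" "fle \<mu> w (u + v)"
  shows "fle \<nu> (T u - T v)
    (op_abs \<mu> \<nu> T (u + v) - op_abs \<mu> \<nu> T w + T (E.fmeet u w - E.fmeet v w))"
proof -
  let ?u' = "u - E.fmeet u w" and ?v' = "v - E.fmeet v w"
  have u': "fle \<mu> 0 ?u'" and v': "fle \<mu> 0 ?v'"
    using E.fle_iff_diff_nonneg[of "E.fmeet u w" u] E.fle_iff_diff_nonneg[of "E.fmeet v w" v] by simp_all
  have split: "T u - T v = (T ?u' - T ?v') + T (E.fmeet u w - E.fmeet v w)"
    by (simp add: linear_diff[OF FLb_linear[OF T]] algebra_simps)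
  have "fle \<nu> (T ?u' - T ?v') (op_abs \<mu> \<nu> T (?u' + ?v'))"
    by (rule op_abs_diff_le[OF T u' v'])
  also have "fle \<nu> \<dots> (op_abs \<mu> \<nu> T (u + v - w))"
    using E.diff_fmeet_add_le[OF u v w] by (rule op_abs_mono[OF T])
  also have "op_abs \<mu> \<nu> T (u + v - w) = op_abs \<mu> \<nu> T (u + v) - op_abs \<mu> \<nu> T w"
    by (rule linear_diff[OF linear_op_abs[OF T]])
  finally show ?thesis
    unfolding split by (rule F.fle_add_right)
qed

text \<open>Each Riesz--Kantorovich term \<open>T u - T (y\<^sub>b - u)\<close> differs from a term bounded by
  \<open>|T| y\<^sub>b - |T| y\<^sub>a\<close> by \<open>T (u \<and> y\<^sub>a - (y\<^sub>b - u) \<and> y\<^sub>a)\<close>, and the latter net is order null.\<close>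

lemma rk_term_le_if_preserves:
  assumes T: "T \<in> FLb \<mu> \<nu>" and dir: "directed_set I r"
    and pres: "preserves_order_convergence \<mu> \<nu> I r T" and y: "fdecreases_to_zero \<mu> I r y"
    and b: "b \<in> I" and l: "\<And>a. a \<in> I \<Longrightarrow> fle \<nu> l (op_abs \<mu> \<nu> T (y a))"
    and u: "fle \<mu> 0 u" "fle \<mu> u (y b)"
  shows "fle \<nu> (T u - T (y b - u)) (op_abs \<mu> \<nu> T (y b) - l)"
proof -
  let ?P = "op_abs \<mu> \<nu> T"
  define v where "v = y b - u"
  have v: "fle \<mu> 0 v"
    using u E.fle_iff_diff_nonneg[of u "y b"] unfolding v_def by blast
  have "forder_converges \<nu> I r (\<lambda>a. T (E.fmeet u (y a) - E.fmeet v (y a))) 0"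
    using pres E.fmeet_diff_forder_converges[OF y u(1) v]
    unfolding preserves_order_convergence_def by blast
  then obtain z where z: "fdecreases_to_zero \<nu> I r z"
    and Tz: "\<And>a. a \<in> I \<Longrightarrow> fle \<nu> (fabs \<nu> (T (E.fmeet u (y a) - E.fmeet v (y a)) - 0)) (z a)"
    unfolding forder_converges_def by blast
  have "fle \<nu> (T u - T v - (?P (y b) - l)) 0"
  proof (rule F.fdecreases_to_zero_tail[OF dir z b])
    fix a assume a: "a \<in> I" and ba: "r b a"
    have "fle \<mu> (y a) (u + v)"
      using E.fdecreases_to_zero_antimono[OF y b a ba] unfolding v_def by simp
    then have "fle \<nu> (T u - T v) (?P (y b) - ?P (y a) + T (E.fmeet u (y a) - E.fmeet v (y a)))"
      using apply_diff_le_op_abs_diff[OF T u(1) v E.fdecreases_to_zero_nonneg[OF y a]]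
      unfolding v_def by simp
    also have "fle \<nu> \<dots> ((?P (y b) - l) + z a)"
      using F.fle_add_right[OF F.fle_minus[OF l[OF a]], of "?P (y b)"]
        F.fle_trans[OF F.fabs_ge Tz[OF a, simplified]]
      by (intro F.fle_add_mono) (simp_all add: algebra_simps)
    finally show "fle \<nu> (T u - T v - (?P (y b) - l)) (z a)"
      by (rule F.fle_add_imp_diff_fle)
  qed
  then show ?thesis
    using F.fle_iff_diff_nonpos[of "T u - T v" "?P (y b) - l"] unfolding v_def by simp
qed

lemma is_finf_op_abs_if_preserves:
  assumes T: "T \<in> FLb \<mu> \<nu>" and dir: "directed_set I r"
    and pres: "preserves_order_convergence \<mu> \<nu> I r T" and y: "fdecreases_to_zero \<mu> I r y"
  shows "is_finf \<nu> ((\<lambda>a. op_abs \<mu> \<nu> T (y a)) ` I) 0"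
proof (rule F.is_finf_zeroI)
  fix a assume "a \<in> I"
  then show "fle \<nu> 0 (op_abs \<mu> \<nu> T (y a))"
    using op_abs_nonneg[OF T E.fdecreases_to_zero_nonneg[OF y]] by blast
next
  fix l assume l: "\<And>a. a \<in> I \<Longrightarrow> fle \<nu> l (op_abs \<mu> \<nu> T (y a))"
  obtain b where b: "b \<in> I"
    using dir unfolding directed_set_def by blast
  have yb: "fle \<mu> 0 (y b)"
    using E.fdecreases_to_zero_nonneg[OF y b] .
  have "fle \<nu> (rk_sup T (y b)) (op_abs \<mu> \<nu> T (y b) - l)"
    using rk_term_le_if_preserves[OF T dir pres y b l] by (intro rk_sup_least[OF yb])
  then have "fle \<nu> (op_abs \<mu> \<nu> T (y b)) (op_abs \<mu> \<nu> T (y b) - l)"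
    using op_abs_eq_rk_sup[OF T yb] by simp
  then show "fle \<nu> l 0"
    using F.fle_diff_swap[of "op_abs \<mu> \<nu> T (y b)" "op_abs \<mu> \<nu> T (y b)" l] by simp
qed

lemma forder_converges_if_is_finf_op_abs:
  assumes T: "T \<in> FLb \<mu> \<nu>" and y: "fdecreases_to_zero \<mu> I r y"
    and xy: "\<And>a. a \<in> I \<Longrightarrow> fle \<mu> (fabs \<mu> (x a - 0)) (y a)"
    and inf: "is_finf \<nu> ((\<lambda>a. op_abs \<mu> \<nu> T (y a)) ` I) 0"
  shows "forder_converges \<nu> I r (\<lambda>a. T (x a)) 0"
  unfolding forder_converges_def
proof (intro exI conjI ballI)
  show "fdecreases_to_zero \<nu> I r (\<lambda>a. op_abs \<mu> \<nu> T (y a))"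
    unfolding fdecreases_to_zero_def
    using E.fdecreases_to_zero_antimono[OF y] op_abs_mono[OF T] inf by blast
  fix a assume a: "a \<in> I"
  have "fle \<nu> (fabs \<nu> (T (x a))) (op_abs \<mu> \<nu> T (fabs \<mu> (x a)))"
    by (rule fabs_apply_le_op_abs[OF T])
  also have "fle \<nu> \<dots> (op_abs \<mu> \<nu> T (y a))"
    using xy[OF a] op_abs_mono[OF T] by simp
  finally show "fle \<nu> (fabs \<nu> (T (x a) - 0)) (op_abs \<mu> \<nu> T (y a))"
    by simp
qed

lemma is_finf_op_abs_gen_ideal:
  assumes T: "T \<in> FLb \<mu> \<nu>" and S: "S \<in> gen_ideal \<mu> \<nu> T"
    and y: "\<And>a. a \<in> I \<Longrightarrow> fle \<mu> 0 (y a)"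
    and inf: "is_finf \<nu> ((\<lambda>a. op_abs \<mu> \<nu> T (y a)) ` I) 0"
  shows "is_finf \<nu> ((\<lambda>a. op_abs \<mu> \<nu> S (y a)) ` I) 0"
proof -
  obtain c where SF: "S \<in> FLb \<mu> \<nu>" and c: "c > 0"
    "op_le \<mu> \<nu> (op_abs \<mu> \<nu> S) (\<lambda>x. c *\<^sub>R op_abs \<mu> \<nu> T x)"
    using gen_ideal_dominated[OF T S] by blast
  show ?thesis
  proof (rule F.is_finf_zeroI)
    fix a assume "a \<in> I"
    then show "fle \<nu> 0 (op_abs \<mu> \<nu> S (y a))"
      using op_abs_nonneg[OF SF y] by blast
  next
    fix l assume l: "\<And>a. a \<in> I \<Longrightarrow> fle \<nu> l (op_abs \<mu> \<nu> S (y a))"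
    have "fle \<nu> (inverse c *\<^sub>R l) 0"
    proof (rule F.is_finf_zeroD[OF inf])
      fix a assume a: "a \<in> I"
      have "fle \<nu> l (c *\<^sub>R op_abs \<mu> \<nu> T (y a))"
        using l[OF a] op_leD[OF c(2) y[OF a]] F.fle_trans by blast
      then show "fle \<nu> (inverse c *\<^sub>R l) (op_abs \<mu> \<nu> T (y a))"
        using F.fle_scaleR[of "inverse c"] c by fastforce
    qed
    then show "fle \<nu> l 0"
      using F.fle_scaleR[OF c(1), of "inverse c *\<^sub>R l" 0] c by simp
  qed
qed

lemma null_ideal_closed_if_preserves:
  assumes T: "T \<in> FLb \<mu> \<nu>" and dir: "directed_set I r"
    and pres: "preserves_order_convergence \<mu> \<nu> I r T" and S: "S \<in> gen_ideal \<mu> \<nu> T"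
  shows "closed_under_increasing_sups \<mu> I r (null_ideal \<mu> \<nu> S)"
  unfolding closed_under_increasing_sups_def
proof (intro allI impI, elim conjE)
  fix v s
  assume v: "\<forall>a\<in>I. fle \<mu> 0 (v a) \<and> v a \<in> null_ideal \<mu> \<nu> S"
    and mono: "\<forall>a\<in>I. \<forall>b\<in>I. r a b \<longrightarrow> fle \<mu> (v a) (v b)"
    and s: "is_fsup \<mu> (v ` I) s"
  have SF: "S \<in> FLb \<mu> \<nu>"
    by (rule gen_ideal_FLb[OF T S])
  have vs: "a \<in> I \<Longrightarrow> fle \<mu> (v a) s" for a
    using s unfolding is_sup_on_def is_ub_on_def by blast
  obtain b where b: "b \<in> I"
    using dir unfolding directed_set_def by blast
  have s0: "fle \<mu> 0 s"
    using v b vs E.fle_trans by blast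
  have dec: "fdecreases_to_zero \<mu> I r (\<lambda>a. s - v a)"
    using mono s by (rule E.fdecreases_to_zero_sup_diff)
  have infT: "is_finf \<nu> ((\<lambda>a. op_abs \<mu> \<nu> T (s - v a)) ` I) 0"
    by (rule is_finf_op_abs_if_preserves[OF T dir pres dec])
  have inf: "is_finf \<nu> ((\<lambda>a. op_abs \<mu> \<nu> S (s - v a)) ` I) 0"
    by (rule is_finf_op_abs_gen_ideal[OF T S _ infT]) (rule E.fdecreases_to_zero_nonneg[OF dec])
  have "op_abs \<mu> \<nu> S (v a) = 0" if "a \<in> I" for a
    using v mem_null_ideal_iff that by blast
  then have "op_abs \<mu> \<nu> S (s - v a) = op_abs \<mu> \<nu> S s" if "a \<in> I" for a
    using linear_diff[OF linear_op_abs[OF SF]] that by simp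
  then have "fle \<nu> (op_abs \<mu> \<nu> S s) 0"
    using F.is_finf_zeroD[OF inf] by simp
  then show "s \<in> null_ideal \<mu> \<nu> S"
    using mem_null_ideal_iff[OF s0] op_abs_nonneg[OF SF s0] F.fle_antisym by blast
qed

end

text \<open>For \<open>y \<down> 0\<close>, \<open>\<beta>\<close> and \<open>n > 0\<close>, the net \<open>approx \<alpha> = (y\<^sub>\<beta> - n y\<^sub>\<alpha>)\<^sup>+\<close> increases to
  \<open>y\<^sub>\<beta>\<close>, and \<open>component\<close> is the component of \<open>|T|\<close> on the band generated by this net.
  The residual operator \<open>|T| - component\<close> lies in \<open>A\<^sub>T\<close> and annihilates the net, while
  annihilating \<open>y\<^sub>\<beta>\<close> forces \<open>n inf |T| y\<^sub>\<alpha> \<le> |T| y\<^sub>\<beta>\<close>.\<close>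

locale modulus_component = fuzzy_riesz_operators \<mu> \<nu>
  for \<mu> :: "'a::real_vector \<Rightarrow> 'a \<Rightarrow> real" and \<nu> :: "'b::real_vector \<Rightarrow> 'b \<Rightarrow> real" +
  fixes T :: "'a \<Rightarrow> 'b" and I :: "'i set" and r :: "'i \<Rightarrow> 'i \<Rightarrow> bool" and y :: "'i \<Rightarrow> 'a"
    and \<beta> :: 'i and n :: real
  assumes T: "T \<in> FLb \<mu> \<nu>" and dir: "directed_set I r" and y: "fdecreases_to_zero \<mu> I r y"
    and \<beta>: "\<beta> \<in> I" and n: "0 < n"
begin

abbreviation P :: "'a \<Rightarrow> 'b" where
  "P \<equiv> op_abs \<mu> \<nu> T"

definition approx :: "'i \<Rightarrow> 'a" where
  "approx a = E.fpos (y \<beta> - n *\<^sub>R y a)"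

definition component_set :: "'a \<Rightarrow> 'b set" where
  "component_set z = (\<lambda>(a, t). P (E.fmeet z (t *\<^sub>R approx a))) ` (I \<times> {0<..})"

definition component :: "'a \<Rightarrow> 'b" where
  "component z = F.fsup (component_set z)"

definition residual_op :: "'a \<Rightarrow> 'b" where
  "residual_op = pos_extension (\<lambda>z. P z - component z)"

lemma linear_P: "linear P"
  by (rule linear_op_abs[OF T])

lemma approx_nonneg: "fle \<mu> 0 (t *\<^sub>R approx a)" if "0 \<le> t"
  using E.fle_scaleR_nonneg[OF that, of 0 "approx a"] unfolding approx_def by simp

lemma approx_mono:
  assumes "a \<in> I" "c \<in> I" "r a c"
  shows "fle \<mu> (approx a) (approx c)"
proof -
  have "fle \<mu> (n *\<^sub>R y c) (n *\<^sub>R y a)"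
    by (rule E.fle_scaleR[OF n E.fdecreases_to_zero_antimono[OF y assms]])
  from E.fle_add_right[OF E.fle_minus[OF this], of "y \<beta>"]
  have "fle \<mu> (y \<beta> - n *\<^sub>R y a) (y \<beta> - n *\<^sub>R y c)"
    by (simp add: algebra_simps)
  then show ?thesis
    unfolding approx_def by (rule E.fpos_mono)
qed

lemma is_fsup_approx: "is_fsup \<mu> (approx ` I) (y \<beta>)"
  unfolding is_sup_on_def is_ub_on_def
proof (intro conjI allI impI ballI)
  fix q assume "q \<in> approx ` I"
  then obtain a where a: "a \<in> I" "q = approx a"
    by blast
  have "fle \<mu> (y \<beta> - n *\<^sub>R y a) (y \<beta>)"
    using E.fle_diff_nonneg E.fle_scaleR[OF n E.fdecreases_to_zero_nonneg[OF y a(1)]] by simp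
  then show "fle \<mu> q (y \<beta>)"
    unfolding a approx_def E.fpos_def using E.fdecreases_to_zero_nonneg[OF y \<beta>] by (intro E.fjoin_least)
next
  fix u assume "u \<in> UNIV \<and> (\<forall>q\<in>approx ` I. fle \<mu> q u)"
  then have u: "\<And>a. a \<in> I \<Longrightarrow> fle \<mu> (approx a) u"
    by blast
  have "fle \<mu> (inverse n *\<^sub>R (y \<beta> - u)) 0"
  proof (rule E.fdecreases_to_zero_greatest[OF y])
    fix a assume a: "a \<in> I"
    have "fle \<mu> (y \<beta> - n *\<^sub>R y a) u"
      using E.fle_trans[OF E.fpos_ge u[OF a, unfolded approx_def]] .
    from E.fle_add_right[OF this, of "n *\<^sub>R y a - u"] have "fle \<mu> (y \<beta> - u) (n *\<^sub>R y a)"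
      by (simp add: algebra_simps)
    from E.fle_scaleR[OF _ this, of "inverse n"] show "fle \<mu> (inverse n *\<^sub>R (y \<beta> - u)) (y a)"
      using n by simp
  qed
  then have "fle \<mu> (y \<beta> - u) 0"
    using E.fle_scaleR[OF n, of "inverse n *\<^sub>R (y \<beta> - u)" 0] n by simp
  then show "fle \<mu> (y \<beta>) u"
    using E.fle_iff_diff_nonpos[of "y \<beta>" u] by simp
qed simp

lemma component_set_bounded: "fle \<mu> 0 z \<Longrightarrow> q \<in> component_set z \<Longrightarrow> fle \<nu> q (P z)"
  unfolding component_set_def using op_abs_mono[OF T E.fmeet_lower1] by auto

lemma component_upper:
  "fle \<mu> 0 z \<Longrightarrow> a \<in> I \<Longrightarrow> 0 < t \<Longrightarrow> fle \<nu> (P (E.fmeet z (t *\<^sub>R approx a))) (component z)"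
  unfolding component_def by (rule F.fsup_upper[OF _ component_set_bounded]) (auto simp: component_set_def)

lemma component_least:
  assumes "fle \<mu> 0 z" "\<And>a t. a \<in> I \<Longrightarrow> 0 < t \<Longrightarrow> fle \<nu> (P (E.fmeet z (t *\<^sub>R approx a))) b"
  shows "fle \<nu> (component z) b"
  unfolding component_def using assms \<beta> by (intro F.fsup_least) (auto simp: component_set_def)

lemma component_le: "fle \<mu> 0 z \<Longrightarrow> fle \<nu> (component z) (P z)"
  by (rule component_least) (auto intro: op_abs_mono[OF T])

lemma component_nonneg:
  assumes z: "fle \<mu> 0 z"
  shows "fle \<nu> 0 (component z)"
proof -
  have "fle \<nu> 0 (P (E.fmeet z (1 *\<^sub>R approx \<beta>)))"
    using op_abs_nonneg[OF T] E.fmeet_nonneg[OF z] approx_nonneg[of 1] by simp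
  also have "fle \<nu> \<dots> (component z)"
    by (rule component_upper[OF z \<beta>]) simp
  finally show ?thesis .
qed

lemma component_upper_add:
  assumes z1: "fle \<mu> 0 z1" and z2: "fle \<mu> 0 z2"
    and a: "a \<in> I" "0 < t" and a': "a' \<in> I" "0 < t'"
  shows "fle \<nu> (P (E.fmeet z1 (t *\<^sub>R approx a)) + P (E.fmeet z2 (t' *\<^sub>R approx a')))
    (component (z1 + z2))"
proof -
  obtain c where c: "c \<in> I" "r a c" "r a' c"
    using dir a a' unfolding directed_set_def by blast
  have "fle \<mu> (E.fmeet z1 (t *\<^sub>R approx a) + E.fmeet z2 (t' *\<^sub>R approx a'))
      (E.fmeet (z1 + z2) ((t + t') *\<^sub>R approx c))"
  proof (rule E.fmeet_greatest)
    show "fle \<mu> (E.fmeet z1 (t *\<^sub>R approx a) + E.fmeet z2 (t' *\<^sub>R approx a')) (z1 + z2)"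
      by (intro E.fle_add_mono) auto
    have "fle \<mu> (E.fmeet z1 (t *\<^sub>R approx a)) (t *\<^sub>R approx c)"
      using E.fmeet_lower2 E.fle_scaleR[OF a(2) approx_mono[OF a(1) c(1,2)]] E.fle_trans by blast
    moreover have "fle \<mu> (E.fmeet z2 (t' *\<^sub>R approx a')) (t' *\<^sub>R approx c)"
      using E.fmeet_lower2 E.fle_scaleR[OF a'(2) approx_mono[OF a'(1) c(1,3)]] E.fle_trans by blast
    ultimately show "fle \<mu> (E.fmeet z1 (t *\<^sub>R approx a) + E.fmeet z2 (t' *\<^sub>R approx a'))
        ((t + t') *\<^sub>R approx c)"
      using E.fle_add_mono by (simp add: scaleR_add_left)
  qed
  then have "fle \<nu> (P (E.fmeet z1 (t *\<^sub>R approx a)) + P (E.fmeet z2 (t' *\<^sub>R approx a')))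
      (P (E.fmeet (z1 + z2) ((t + t') *\<^sub>R approx c)))"
    using op_abs_mono[OF T] linear_add[OF linear_P] by metis
  also have "fle \<nu> \<dots> (component (z1 + z2))"
    using z1 z2 a(2) a'(2) by (intro component_upper[OF _ c(1)] E.fle_add_nonneg) auto
  finally show ?thesis .
qed

lemma component_add:
  assumes z1: "fle \<mu> 0 z1" and z2: "fle \<mu> 0 z2"
  shows "component (z1 + z2) = component z1 + component z2"
proof (rule F.fle_antisym)
  have z12: "fle \<mu> 0 (z1 + z2)"
    using z1 z2 E.fle_add_nonneg by blast
  show "fle \<nu> (component (z1 + z2)) (component z1 + component z2)"
  proof (rule component_least[OF z12])
    fix a and t :: real assume a: "a \<in> I" and t: "0 < t"
    have "fle \<mu> (E.fmeet (z1 + z2) (t *\<^sub>R approx a))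
        (E.fmeet z1 (t *\<^sub>R approx a) + E.fmeet z2 (t *\<^sub>R approx a))"
      using t by (intro E.fmeet_add_le z1 z2 approx_nonneg) simp
    then have "fle \<nu> (P (E.fmeet (z1 + z2) (t *\<^sub>R approx a)))
        (P (E.fmeet z1 (t *\<^sub>R approx a)) + P (E.fmeet z2 (t *\<^sub>R approx a)))"
      using op_abs_mono[OF T] linear_add[OF linear_P] by metis
    also have "fle \<nu> \<dots> (component z1 + component z2)"
      by (intro F.fle_add_mono component_upper z1 z2 a t)
    finally show "fle \<nu> (P (E.fmeet (z1 + z2) (t *\<^sub>R approx a))) (component z1 + component z2)" .
  qed
  have "fle \<nu> (component z1) (component (z1 + z2) - component z2)"
  proof (rule component_least[OF z1])
    fix a and t :: real assume a: "a \<in> I" "0 < t"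
    have "fle \<nu> (component z2) (component (z1 + z2) - P (E.fmeet z1 (t *\<^sub>R approx a)))"
    proof (rule component_least[OF z2])
      fix a' and t' :: real assume "a' \<in> I" "0 < t'"
      with component_upper_add[OF z1 z2 a]
      show "fle \<nu> (P (E.fmeet z2 (t' *\<^sub>R approx a'))) (component (z1 + z2) - P (E.fmeet z1 (t *\<^sub>R approx a)))"
        by (intro F.fle_add_imp_fle_diff)
    qed
    then show "fle \<nu> (P (E.fmeet z1 (t *\<^sub>R approx a))) (component (z1 + z2) - component z2)"
      by (rule F.fle_diff_swap)
  qed
  from F.fle_diff_imp_fle_add[OF this]
  show "fle \<nu> (component z1 + component z2) (component (z1 + z2))"
    by (simp add: add.commute)
qed

lemma component_scaleR:
  assumes c: "0 < c" and z: "fle \<mu> 0 z"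
  shows "component (c *\<^sub>R z) = c *\<^sub>R component z"
proof -
  have P_meet: "P (E.fmeet (c *\<^sub>R z) (t *\<^sub>R approx a)) = c *\<^sub>R P (E.fmeet z ((t / c) *\<^sub>R approx a))"
    for t a
    using E.fmeet_scaleR[OF c, of z "(t / c) *\<^sub>R approx a"] linear_scale[OF linear_P] c by simp
  have "component_set (c *\<^sub>R z) = (\<lambda>q. c *\<^sub>R q) ` component_set z"
  proof (intro set_eqI iffI)
    fix q assume "q \<in> component_set (c *\<^sub>R z)"
    then obtain a t where at: "a \<in> I" "0 < t" "q = c *\<^sub>R P (E.fmeet z ((t / c) *\<^sub>R approx a))"
      unfolding component_set_def P_meet by auto
    moreover have "P (E.fmeet z ((t / c) *\<^sub>R approx a)) \<in> component_set z"
      unfolding component_set_def using at c by (intro image_eqI[of _ _ "(a, t / c)"]) auto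
    ultimately show "q \<in> (\<lambda>q. c *\<^sub>R q) ` component_set z"
      by blast
  next
    fix q assume "q \<in> (\<lambda>q. c *\<^sub>R q) ` component_set z"
    then obtain a t where at: "a \<in> I" "0 < t" "q = c *\<^sub>R P (E.fmeet z (t *\<^sub>R approx a))"
      unfolding component_set_def by auto
    then have "q = P (E.fmeet (c *\<^sub>R z) ((c * t) *\<^sub>R approx a))"
      using P_meet[of "c * t" a] c by simp
    then show "q \<in> component_set (c *\<^sub>R z)"
      unfolding component_set_def using at c by (intro image_eqI[of _ _ "(a, c * t)"]) auto
  qed
  moreover have "component_set z \<noteq> {}"
    unfolding component_set_def using \<beta> by auto
  ultimately show ?thesis
    unfolding component_def using F.fsup_scaleR[OF c _ component_set_bounded[OF z]] by simp
qed

lemma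
  shows linear_residual_op: "linear residual_op"
    and residual_op_eq: "fle \<mu> 0 z \<Longrightarrow> residual_op z = P z - component z"
  unfolding residual_op_def
  by (rule linear_pos_extension pos_extension_eq;
      simp add: component_add component_scaleR linear_add[OF linear_P] linear_scale[OF linear_P]
        scaleR_diff_right)+

lemma fuzzy_positive_residual_op: "fuzzy_positive \<mu> \<nu> residual_op"
  unfolding fuzzy_positive_def
  using residual_op_eq component_le F.fle_iff_diff_nonneg by simp

lemma op_abs_residual_op: "op_abs \<mu> \<nu> residual_op = residual_op"
  by (rule op_abs_of_positive[OF linear_residual_op fuzzy_positive_residual_op])

lemma residual_op_gen_ideal: "residual_op \<in> gen_ideal \<mu> \<nu> T"
proof (rule mem_gen_ideal)
  show "residual_op \<in> FLb \<mu> \<nu>"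
    by (rule FLb_if_positive[OF linear_residual_op fuzzy_positive_residual_op])
  show "op_le \<mu> \<nu> (op_abs \<mu> \<nu> residual_op) P"
    unfolding op_abs_residual_op
    by (intro op_leI) (simp add: residual_op_eq F.fle_diff_nonneg component_nonneg)
qed

lemma approx_mem_null_ideal:
  assumes "a \<in> I"
  shows "approx a \<in> null_ideal \<mu> \<nu> residual_op"
proof -
  have a: "fle \<mu> 0 (approx a)"
    using approx_nonneg[of 1] by simp
  have "fle \<nu> (P (approx a)) (component (approx a))"
    using component_upper[OF a assms, of 1] by (simp add: E.fmeet_absorb1)
  then have "fle \<nu> (residual_op (approx a)) 0"
    using residual_op_eq[OF a] F.fle_iff_diff_nonpos[of "P (approx a)"] by simp
  then have "residual_op (approx a) = 0"
    using fuzzy_positiveD[OF fuzzy_positive_residual_op a] F.fle_antisym by blast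
  then show ?thesis
    using mem_null_ideal_iff[OF a] op_abs_residual_op by simp
qed

lemma multiple_le_if_mem_null_ideal:
  assumes y\<beta>: "y \<beta> \<in> null_ideal \<mu> \<nu> residual_op"
    and l: "\<And>a. a \<in> I \<Longrightarrow> fle \<nu> l (P (y a))"
  shows "fle \<nu> (n *\<^sub>R l) (P (y \<beta>))"
proof -
  have y0: "fle \<mu> 0 (y \<beta>)"
    by (rule E.fdecreases_to_zero_nonneg[OF y \<beta>])
  have "component (y \<beta>) = P (y \<beta>)"
    using y\<beta> mem_null_ideal_iff[OF y0] op_abs_residual_op residual_op_eq[OF y0] by simp
  moreover have "fle \<nu> (component (y \<beta>)) (P (y \<beta>) - l + inverse n *\<^sub>R P (y \<beta>))"
  proof (rule component_least[OF y0])
    fix a and t :: real assume a: "a \<in> I" and t: "0 < t"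
    obtain c where c: "c \<in> I" "r a c" "r \<beta> c"
      using dir a \<beta> unfolding directed_set_def by blast
    have "fle \<mu> (E.fmeet (y \<beta>) (t *\<^sub>R approx a)) (E.fmeet (y \<beta>) (t *\<^sub>R approx c))"
      by (rule E.fmeet_mono[OF E.fle_refl E.fle_scaleR[OF t approx_mono[OF a c(1,2)]]])
    also have "fle \<mu> \<dots> (y \<beta> - y c + inverse n *\<^sub>R y \<beta>)"
      unfolding approx_def using E.fdecreases_to_zero_nonneg[OF y c(1)]
        E.fdecreases_to_zero_antimono[OF y \<beta> c(1,3)] n t
      by (rule E.fmeet_fpos_diff_le)
    finally have "fle \<nu> (P (E.fmeet (y \<beta>) (t *\<^sub>R approx a))) (P (y \<beta> - y c + inverse n *\<^sub>R y \<beta>))"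
      by (rule op_abs_mono[OF T])
    also have "P (y \<beta> - y c + inverse n *\<^sub>R y \<beta>) = P (y \<beta>) - P (y c) + inverse n *\<^sub>R P (y \<beta>)"
      by (simp add: linear_add[OF linear_P] linear_diff[OF linear_P] linear_scale[OF linear_P])
    also have "fle \<nu> \<dots> (P (y \<beta>) - l + inverse n *\<^sub>R P (y \<beta>))"
      using F.fle_add_right[OF F.fle_minus[OF l[OF c(1)]], of "P (y \<beta>) + inverse n *\<^sub>R P (y \<beta>)"]
      by (simp add: algebra_simps)
    finally show "fle \<nu> (P (E.fmeet (y \<beta>) (t *\<^sub>R approx a))) (P (y \<beta>) - l + inverse n *\<^sub>R P (y \<beta>))" .
  qed
  ultimately have "fle \<nu> l (inverse n *\<^sub>R P (y \<beta>))"
    using F.fle_add_right[of _ _ "l - P (y \<beta>)"] by (fastforce simp: algebra_simps)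
  from F.fle_scaleR[OF n this] show ?thesis
    using n by simp
qed

end

context fuzzy_riesz_operators
begin

lemma is_finf_op_abs_if_null_ideals_closed:
  assumes T: "T \<in> FLb \<mu> \<nu>" and dir: "directed_set I r" and y: "fdecreases_to_zero \<mu> I r y"
    and closed: "\<And>S. S \<in> gen_ideal \<mu> \<nu> T \<Longrightarrow> closed_under_increasing_sups \<mu> I r (null_ideal \<mu> \<nu> S)"
  shows "is_finf \<nu> ((\<lambda>a. op_abs \<mu> \<nu> T (y a)) ` I) 0"
proof (rule F.is_finf_zeroI)
  fix a assume "a \<in> I"
  then show "fle \<nu> 0 (op_abs \<mu> \<nu> T (y a))"
    using op_abs_nonneg[OF T E.fdecreases_to_zero_nonneg[OF y]] by blast
next
  fix l assume l: "\<And>a. a \<in> I \<Longrightarrow> fle \<nu> l (op_abs \<mu> \<nu> T (y a))"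
  obtain \<beta> where \<beta>: "\<beta> \<in> I"
    using dir unfolding directed_set_def by blast
  show "fle \<nu> l 0"
  proof (rule F.fle_zero_if_multiples_bounded)
    fix m :: nat assume "m \<ge> 1"
    then interpret C: modulus_component \<mu> \<nu> T I r y \<beta> "real m"
      using T dir y \<beta> by unfold_locales auto
    have "closed_under_increasing_sups \<mu> I r (null_ideal \<mu> \<nu> C.residual_op)"
      by (rule closed[OF C.residual_op_gen_ideal])
    then have "y \<beta> \<in> null_ideal \<mu> \<nu> C.residual_op"
      using C.approx_mem_null_ideal C.approx_nonneg[of 1] C.approx_mono C.is_fsup_approx
      unfolding closed_under_increasing_sups_def by (elim allE[of _ C.approx] allE[of _ "y \<beta>"]) simp
    then show "fle \<nu> (real m *\<^sub>R l) (op_abs \<mu> \<nu> T (y \<beta>))"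
      by (rule C.multiple_le_if_mem_null_ideal[OF _ l])
  qed
qed

lemma preserves_order_convergence_iff_null_ideals_closed:
  assumes T: "T \<in> FLb \<mu> \<nu>" and dir: "directed_set I r"
  shows "preserves_order_convergence \<mu> \<nu> I r T \<longleftrightarrow>
    (\<forall>S\<in>gen_ideal \<mu> \<nu> T. closed_under_increasing_sups \<mu> I r (null_ideal \<mu> \<nu> S))"
proof
  assume "preserves_order_convergence \<mu> \<nu> I r T"
  then show "\<forall>S\<in>gen_ideal \<mu> \<nu> T. closed_under_increasing_sups \<mu> I r (null_ideal \<mu> \<nu> S)"
    using null_ideal_closed_if_preserves[OF T dir] by blast
next
  assume closed: "\<forall>S\<in>gen_ideal \<mu> \<nu> T. closed_under_increasing_sups \<mu> I r (null_ideal \<mu> \<nu> S)"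
  show "preserves_order_convergence \<mu> \<nu> I r T"
    unfolding preserves_order_convergence_def
  proof (intro allI impI)
    fix x assume "forder_converges \<mu> I r x 0"
    then obtain y where y: "fdecreases_to_zero \<mu> I r y"
      and xy: "\<And>a. a \<in> I \<Longrightarrow> fle \<mu> (fabs \<mu> (x a - 0)) (y a)"
      unfolding forder_converges_def by blast
    have inf: "is_finf \<nu> ((\<lambda>a. op_abs \<mu> \<nu> T (y a)) ` I) 0"
      by (rule is_finf_op_abs_if_null_ideals_closed[OF T dir y]) (use closed in blast)
    show "forder_converges \<nu> I r (\<lambda>a. T (x a)) 0"
      by (rule forder_converges_if_is_finf_op_abs[OF T y _ inf]) (fact xy)
  qed
qed

end

theorem theorem4p7:
  fixes \<mu> :: "'a::real_vector \<Rightarrow> 'a \<Rightarrow> real"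
    and \<nu> :: "'b::real_vector \<Rightarrow> 'b \<Rightarrow> real"
    and T :: "'a \<Rightarrow> 'b"
  assumes "fuzzy_riesz \<mu>" and "fuzzy_riesz \<nu>" and "fuzzy_dedekind_complete \<nu>"
    and "T \<in> FLb \<mu> \<nu>"
    and "\<exists>f :: 'a set \<Rightarrow> 'i. inj f"
  shows "(fuzzy_order_continuous TYPE('i) \<mu> \<nu> T \<longleftrightarrow>
           (\<forall>S \<in> gen_ideal \<mu> \<nu> T. fuzzy_band \<mu> (null_ideal \<mu> \<nu> S))) \<and>
         (fuzzy_sigma_order_continuous \<mu> \<nu> T \<longleftrightarrow>
           (\<forall>S \<in> gen_ideal \<mu> \<nu> T. fuzzy_sigma_ideal \<mu> (null_ideal \<mu> \<nu> S)))"
proof -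
  interpret fuzzy_riesz_operators \<mu> \<nu>
    using assms(1-3) by unfold_locales
  obtain f :: "'a set \<Rightarrow> 'i" where "inj f"
    using assms(5) by blast
  then have inj: "inj (\<lambda>z. f {z})"
    by (auto simp: inj_def)
  have ideal: "S \<in> gen_ideal \<mu> \<nu> T \<Longrightarrow> fuzzy_ideal \<mu> (null_ideal \<mu> \<nu> S)" for S
    by (rule fuzzy_ideal_null_ideal[OF gen_ideal_FLb[OF assms(4)]])
  have "fuzzy_order_continuous TYPE('i) \<mu> \<nu> T \<longleftrightarrow>
      (\<forall>(I :: 'i set) r. directed_set I r \<longrightarrow>
        (\<forall>S\<in>gen_ideal \<mu> \<nu> T. closed_under_increasing_sups \<mu> I r (null_ideal \<mu> \<nu> S)))"
    unfolding fuzzy_order_continuous_iff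
    using preserves_order_convergence_iff_null_ideals_closed[OF assms(4)] by blast
  also have "\<dots> \<longleftrightarrow> (\<forall>S \<in> gen_ideal \<mu> \<nu> T. fuzzy_band \<mu> (null_ideal \<mu> \<nu> S))"
    using E.fuzzy_band_if_closed_under_increasing_sups[OF ideal inj]
      fuzzy_band_closed_under_increasing_sups by blast
  finally show ?thesis
    unfolding fuzzy_sigma_order_continuous_iff fuzzy_sigma_ideal_iff_closed_under_increasing_sups
      preserves_order_convergence_iff_null_ideals_closed[OF assms(4) directed_set_nat]
    using ideal by blast
qed

end
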